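(* For any integers $n\ge2$, $k\ge1$, $D\ge1$ and any $\delta\in(0,1)$, any $\mathrm{MEQ}_{k,n}$ decision tree of depth $D$ computing a function $f:(\{0,1\}^n)^k\to S$ can be implemented by a quantum $k$-party $\mathsf{SMP}$ protocol (with no shared randomness and no shared entanglement) that uses $O(k(\log D+\log(1/\delta))\log n)$ qubits of communication in total and, on every input, outputs $f(x_1,\dots,x_k)$ with error probability at most $\delta$.
   Context: Quantum $k$-party simultaneous message-passing ($\mathsf{SMP}$) model: $k$ players, player $\ell$ holding private input $x_\ell\in\{0,1\}^n$, each send one quantum message (computed from its own input only; no shared randomness or entanglement) to a referee who then outputs a value; the communication cost is the maximum total number of qubits sent. The modified equality query is $\mathrm{MEQ}_{k,n}(i,j,y,z)=1$ if $x_i\oplus y=x_j\oplus z$ and $0$ otherwise ($\oplus$ = bitwise XOR). An $\mathrm{MEQ}_{k,n}$ decision tree is a rooted binary tree in which every node has 0 or 2 children; each internal node is labeled by a 4-tuple $(i,j,y,z)$ with $i,j\in[k]$ and fixed strings $y,z\in\{0,1\}^n$, and each leaf is labeled by an element of an output set $S$. On input $(x_1,\dots,x_k)$ it is evaluated starting at the root, moving to the right child if $x_i\oplus y=x_j\oplus z$ and to the left child otherwise, and outputting the label of the leaf reached. Its depth is the maximal number of internal nodes on a root-to-leaf path. It computes $f$ if its output equals $f(x_1,\dots,x_k)$ for all inputs. *)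

theory Defs
  imports Complex_Main "HOL-Library.FuncSet"
begin

type_synonym bits = "bool list"

definition bitstrings :: "nat \<Rightarrow> bits set" where
  "bitstrings n = {v. length v = n}"

definition xor_bits :: "bits \<Rightarrow> bits \<Rightarrow> bits" where
  "xor_bits u v = map2 (\<noteq>) u v"

definition smp_inputs :: "nat \<Rightarrow> nat \<Rightarrow> (nat \<Rightarrow> bits) set" where
  "smp_inputs k n = PiE {..<k} (\<lambda>_. bitstrings n)"

text \<open>Node i j y z left right: go right if x_i xor y = x_j xor z, else left.\<close>
datatype 's meq_tree = Leaf 's | Node nat nat bits bits "'s meq_tree" "'s meq_tree"

fun meq_wf :: "nat \<Rightarrow> nat \<Rightarrow> 's meq_tree \<Rightarrow> bool" where
  "meq_wf k n (Leaf s) = True"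
| "meq_wf k n (Node i j y z l r) =
     (i < k \<and> j < k \<and> length y = n \<and> length z = n \<and> meq_wf k n l \<and> meq_wf k n r)"

fun meq_depth :: "'s meq_tree \<Rightarrow> nat" where
  "meq_depth (Leaf s) = 0"
| "meq_depth (Node i j y z l r) = Suc (max (meq_depth l) (meq_depth r))"

fun meq_eval :: "'s meq_tree \<Rightarrow> (nat \<Rightarrow> bits) \<Rightarrow> 's" where
  "meq_eval (Leaf s) x = s"
| "meq_eval (Node i j y z l r) x =
     (if xor_bits (x i) y = xor_bits (x j) z then meq_eval r x else meq_eval l x)"

definition computes_tree :: "nat \<Rightarrow> nat \<Rightarrow> 's meq_tree \<Rightarrow> ((nat \<Rightarrow> bits) \<Rightarrow> 's) \<Rightarrow> bool" where
  "computes_tree k n T f \<longleftrightarrow> (\<forall>x\<in>smp_inputs k n. meq_eval T x = f x)"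

text \<open>Operators on the Hilbert space with orthonormal basis indexed by a finite set A,
  given by their matrix entries.\<close>

definition psd_on :: "'i set \<Rightarrow> ('i \<Rightarrow> 'i \<Rightarrow> complex) \<Rightarrow> bool" where
  "psd_on A M \<longleftrightarrow>
     (\<forall>a\<in>A. \<forall>b\<in>A. M a b = cnj (M b a)) \<and>
     (\<forall>v :: 'i \<Rightarrow> complex. 0 \<le> Re (\<Sum>a\<in>A. \<Sum>b\<in>A. cnj (v a) * M a b * v b))"

definition density_on :: "'i set \<Rightarrow> ('i \<Rightarrow> 'i \<Rightarrow> complex) \<Rightarrow> bool" where
  "density_on A \<rho> \<longleftrightarrow> psd_on A \<rho> \<and> (\<Sum>a\<in>A. \<rho> a a) = 1"

definition povm_on :: "'i set \<Rightarrow> ('s \<Rightarrow> 'i \<Rightarrow> 'i \<Rightarrow> complex) \<Rightarrow> bool" where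
  "povm_on A E \<longleftrightarrow>
     (\<forall>s. psd_on A (E s)) \<and>
     (\<exists>F. finite F \<and> (\<forall>s. s \<notin> F \<longrightarrow> (\<forall>a\<in>A. \<forall>b\<in>A. E s a b = 0)) \<and>
          (\<forall>a\<in>A. \<forall>b\<in>A. (\<Sum>s\<in>F. E s a b) = (if a = b then 1 else 0)))"

text \<open>Player l sends a (possibly mixed) state on qubits l qubits, i.e. a density operator
  on the space with basis {..<2^(qubits l)}; it depends only on the player's own input.
  The referee applies a POVM to the tensor product of all messages.\<close>
record 's smp_protocol =
  qubits :: "nat \<Rightarrow> nat"
  msg :: "nat \<Rightarrow> bits \<Rightarrow> nat \<Rightarrow> nat \<Rightarrow> complex"
  referee :: "'s \<Rightarrow> (nat \<Rightarrow> nat) \<Rightarrow> (nat \<Rightarrow> nat) \<Rightarrow> complex"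

definition joint_space :: "nat \<Rightarrow> 's smp_protocol \<Rightarrow> (nat \<Rightarrow> nat) set" where
  "joint_space k P = PiE {..<k} (\<lambda>l. {..<2 ^ qubits P l})"

definition joint_state :: "nat \<Rightarrow> 's smp_protocol \<Rightarrow> (nat \<Rightarrow> bits) \<Rightarrow> (nat \<Rightarrow> nat) \<Rightarrow> (nat \<Rightarrow> nat) \<Rightarrow> complex" where
  "joint_state k P x a b = (\<Prod>l<k. msg P l (x l) (a l) (b l))"

definition valid_smp :: "nat \<Rightarrow> nat \<Rightarrow> 's smp_protocol \<Rightarrow> bool" where
  "valid_smp k n P \<longleftrightarrow>
     (\<forall>l<k. \<forall>w\<in>bitstrings n. density_on {..<2 ^ qubits P l} (msg P l w)) \<and>
     povm_on (joint_space k P) (referee P)"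

definition smp_cost :: "nat \<Rightarrow> 's smp_protocol \<Rightarrow> nat" where
  "smp_cost k P = (\<Sum>l<k. qubits P l)"

definition output_prob :: "nat \<Rightarrow> 's smp_protocol \<Rightarrow> (nat \<Rightarrow> bits) \<Rightarrow> 's \<Rightarrow> real" where
  "output_prob k P x s =
     Re (\<Sum>a\<in>joint_space k P. \<Sum>b\<in>joint_space k P. referee P s a b * joint_state k P x b a)"

end

theory Submission
  imports Defs "HOL-Analysis.L2_Norm"
begin

text \<open>Each player sends R copies of a quantum fingerprint of its input built from a code of 2^m = O(n)
  words in which distinct messages disagree on between a quarter and three quarters of the words. A
  node (i, j, y, z) of the tree is a projective swap test on the fingerprints of players i and j, shifted
  by y and z; it accepts with certainty if x_i + y = x_j + z and rejects with probability at least
  1 - (5/8)^R otherwise, so the test moves the state by at most \<epsilon> = (5/8)^(R/2). The referee measures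
  with the POVM whose outcome-s element collects all root-to-leaf paths of projections ending in s.
  Along the evaluation path the state stays within D \<epsilon> of the input state, so the referee outputs the
  correct leaf with probability at least 1 - 2 D \<epsilon>, which is at least 1 - \<delta> for R = O(log D + log 1/\<delta>).
  The cost is k m R = O(k (log D + log 1/\<delta>) log n) qubits; when this bound is below one qubit per
  player (depth one and \<delta> \<ge> 1/2), guessing one of the two leaves already suffices.\<close>

section \<open>Real operators on a finite basis\<close>

text \<open>All amplitudes and measurement operators of the protocol are real, so operators are real matrices
  indexed by a basis set A; psd_on_of_real below transfers positivity to the complex setting.\<close>
type_synonym 'a op = "'a \<Rightarrow> 'a \<Rightarrow> real"

definition id_op :: "'a op" where
  "id_op a b = (if a = b then 1 else 0)"

definition op_mult :: "'a set \<Rightarrow> 'a op \<Rightarrow> 'a op \<Rightarrow> 'a op" where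
  "op_mult A X Y a b = (\<Sum>c\<in>A. X a c * Y c b)"

definition op_apply :: "'a set \<Rightarrow> 'a op \<Rightarrow> ('a \<Rightarrow> real) \<Rightarrow> 'a \<Rightarrow> real" where
  "op_apply A X v a = (\<Sum>b\<in>A. X a b * v b)"

definition gram :: "'a set \<Rightarrow> 'a op \<Rightarrow> 'a op" where
  "gram A K a b = (\<Sum>c\<in>A. K c a * K c b)"

definition quad_form :: "'a set \<Rightarrow> 'a op \<Rightarrow> ('a \<Rightarrow> real) \<Rightarrow> real" where
  "quad_form A X v = (\<Sum>a\<in>A. \<Sum>b\<in>A. v a * X a b * v b)"

definition is_projection :: "'a set \<Rightarrow> 'a op \<Rightarrow> bool" where
  "is_projection A P \<longleftrightarrow>
     (\<forall>a\<in>A. \<forall>b\<in>A. P a b = P b a) \<and> (\<forall>a\<in>A. \<forall>b\<in>A. (\<Sum>c\<in>A. P a c * P c b) = P a b)"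

definition proj_compl :: "'a op \<Rightarrow> 'a op" where
  "proj_compl P a b = id_op a b - P a b"

lemma sum_id_op_left: "finite A \<Longrightarrow> a \<in> A \<Longrightarrow> (\<Sum>c\<in>A. id_op a c * f c) = f a"
  by (simp add: id_op_def if_distrib[of "\<lambda>t. t * _"] cong: if_cong)

lemma sum_id_op_right: "finite A \<Longrightarrow> a \<in> A \<Longrightarrow> (\<Sum>c\<in>A. f c * id_op c a) = f a"
  by (simp add: id_op_def if_distrib[of "\<lambda>t. _ * t"] cong: if_cong)

lemma L2_set_sq: "(L2_set f A)\<^sup>2 = (\<Sum>i\<in>A. (f i)\<^sup>2)"
  unfolding L2_set_def by (simp add: sum_nonneg)

lemma op_apply_id_op: "finite A \<Longrightarrow> a \<in> A \<Longrightarrow> op_apply A id_op v a = v a"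
  unfolding op_apply_def by (rule sum_id_op_left)

lemma op_apply_proj_compl: "finite A \<Longrightarrow> a \<in> A \<Longrightarrow> op_apply A (proj_compl P) v a = v a - op_apply A P v a"
  unfolding op_apply_def proj_compl_def using sum_id_op_left[of A a v]
  by (simp add: algebra_simps sum_subtractf)

lemma op_apply_diff: "op_apply A P (\<lambda>b. u b - w b) a = op_apply A P u a - op_apply A P w a"
  unfolding op_apply_def by (simp add: algebra_simps sum_subtractf)

lemma op_apply_op_mult: "op_apply A (op_mult A P K) v a = op_apply A P (op_apply A K v) a"
proof -
  have "op_apply A (op_mult A P K) v a = (\<Sum>b\<in>A. \<Sum>c\<in>A. P a c * (K c b * v b))"
    unfolding op_apply_def op_mult_def
    by (rule sum.cong[OF refl]) (simp add: sum_distrib_right sum_distrib_left algebra_simps)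
  also have "\<dots> = (\<Sum>c\<in>A. \<Sum>b\<in>A. P a c * (K c b * v b))"
    by (rule sum.swap)
  finally show ?thesis unfolding op_apply_def by (simp add: sum_distrib_left)
qed

lemma quad_form_add: "quad_form A (\<lambda>a b. X a b + Y a b) v = quad_form A X v + quad_form A Y v"
  unfolding quad_form_def by (simp add: algebra_simps sum.distrib)

lemma quad_form_id_op: "finite A \<Longrightarrow> quad_form A id_op u = (L2_set u A)\<^sup>2"
  unfolding quad_form_def L2_set_sq
  by (simp add: id_op_def power2_eq_square if_distrib[of "\<lambda>t. _ * t * _"] cong: if_cong)

lemma quad_form_proj_compl: "finite A \<Longrightarrow> quad_form A (proj_compl P) u = (L2_set u A)\<^sup>2 - quad_form A P u"
  using quad_form_id_op[of A u] unfolding quad_form_def proj_compl_def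
  by (simp add: algebra_simps sum_subtractf)

lemma quad_form_gram: "quad_form A (gram A K) v = (L2_set (op_apply A K v) A)\<^sup>2"
proof -
  have "quad_form A (gram A K) v = (\<Sum>a\<in>A. \<Sum>b\<in>A. \<Sum>c\<in>A. K c a * v a * (K c b * v b))"
    unfolding quad_form_def gram_def by (simp add: sum_distrib_left sum_distrib_right algebra_simps)
  also have "\<dots> = (\<Sum>a\<in>A. \<Sum>c\<in>A. \<Sum>b\<in>A. K c a * v a * (K c b * v b))"
    by (rule sum.cong[OF refl], rule sum.swap)
  also have "\<dots> = (\<Sum>c\<in>A. \<Sum>a\<in>A. \<Sum>b\<in>A. K c a * v a * (K c b * v b))"
    by (rule sum.swap)
  also have "\<dots> = (\<Sum>c\<in>A. (op_apply A K v c)\<^sup>2)"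
    by (simp add: op_apply_def sum_product power2_eq_square)
  finally show ?thesis
    by (simp add: L2_set_sq)
qed

lemma is_projection_id_op: "finite A \<Longrightarrow> is_projection A id_op"
  unfolding is_projection_def by (auto simp: sum_id_op_left) (auto simp: id_op_def)

lemma is_projection_zero: "is_projection A (\<lambda>a b. 0)"
  unfolding is_projection_def by auto

lemma is_projection_proj_compl:
  assumes "finite A" "is_projection A P"
  shows "is_projection A (proj_compl P)"
proof -
  have idem: "(\<Sum>c\<in>A. P a c * P c b) = P a b" if "a \<in> A" "b \<in> A" for a b
    using assms(2) that unfolding is_projection_def by blast
  have "(\<Sum>c\<in>A. proj_compl P a c * proj_compl P c b) = proj_compl P a b" if "a \<in> A" "b \<in> A" for a b
  proof -
    have "(\<Sum>c\<in>A. proj_compl P a c * proj_compl P c b) =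
      (\<Sum>c\<in>A. id_op a c * id_op c b) - (\<Sum>c\<in>A. id_op a c * P c b) - (\<Sum>c\<in>A. P a c * id_op c b)
        + (\<Sum>c\<in>A. P a c * P c b)"
      unfolding proj_compl_def by (simp add: algebra_simps sum.distrib sum_subtractf)
    also have "\<dots> = id_op a b - P a b"
      using that assms(1) by (simp add: sum_id_op_left sum_id_op_right idem)
    finally show ?thesis unfolding proj_compl_def .
  qed
  moreover have "\<forall>a\<in>A. \<forall>b\<in>A. proj_compl P a b = proj_compl P b a"
    using assms(2) unfolding is_projection_def proj_compl_def id_op_def by auto
  ultimately show ?thesis unfolding is_projection_def by blast
qed

lemma sum_op_apply_proj_mult:
  assumes "is_projection A P"
  shows "(\<Sum>c\<in>A. op_apply A P u c * op_apply A P w c) = (\<Sum>e\<in>A. \<Sum>f\<in>A. u e * P e f * w f)"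
proof -
  have PP: "(\<Sum>c\<in>A. P c e * P c f) = P e f" if "e \<in> A" "f \<in> A" for e f
  proof -
    have "(\<Sum>c\<in>A. P c e * P c f) = (\<Sum>c\<in>A. P e c * P c f)"
      using assms that unfolding is_projection_def by (intro sum.cong) auto
    also have "\<dots> = P e f"
      using assms that unfolding is_projection_def by blast
    finally show ?thesis .
  qed
  have "(\<Sum>c\<in>A. op_apply A P u c * op_apply A P w c) =
        (\<Sum>c\<in>A. \<Sum>e\<in>A. \<Sum>f\<in>A. u e * (P c e * P c f) * w f)"
    unfolding op_apply_def sum_product by (simp add: algebra_simps)
  also have "\<dots> = (\<Sum>e\<in>A. \<Sum>c\<in>A. \<Sum>f\<in>A. u e * (P c e * P c f) * w f)"
    by (rule sum.swap)
  also have "\<dots> = (\<Sum>e\<in>A. \<Sum>f\<in>A. \<Sum>c\<in>A. u e * (P c e * P c f) * w f)"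
    by (rule sum.cong[OF refl], rule sum.swap)
  also have "\<dots> = (\<Sum>e\<in>A. \<Sum>f\<in>A. u e * P e f * w f)"
    by (intro sum.cong refl) (simp add: PP flip: sum_distrib_left sum_distrib_right)
  finally show ?thesis .
qed

lemma L2_set_op_apply_proj_sq:
  assumes "is_projection A P"
  shows "(L2_set (op_apply A P u) A)\<^sup>2 = quad_form A P u"
  unfolding L2_set_sq quad_form_def
  by (simp add: power2_eq_square sum_op_apply_proj_mult[OF assms])

lemma L2_set_op_apply_proj_diff_sq:
  assumes "finite A" "is_projection A P"
  shows "(L2_set (\<lambda>a. op_apply A P u a - u a) A)\<^sup>2 = (L2_set u A)\<^sup>2 - quad_form A P u"
proof -
  have "L2_set (\<lambda>a. op_apply A P u a - u a) A = L2_set (op_apply A (proj_compl P) u) A"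
    unfolding L2_set_def
    by (intro arg_cong[where f=sqrt] sum.cong refl) (simp add: op_apply_proj_compl[OF assms(1)] power2_commute)
  then show ?thesis
    using L2_set_op_apply_proj_sq[OF is_projection_proj_compl[OF assms]] quad_form_proj_compl[OF assms(1)]
    by simp
qed

lemma L2_set_op_apply_proj_le:
  assumes "finite A" "is_projection A P"
  shows "L2_set (op_apply A P u) A \<le> L2_set u A"
proof -
  have "0 \<le> (L2_set (\<lambda>a. op_apply A P u a - u a) A)\<^sup>2"
    by (rule zero_le_power2)
  then have "(L2_set (op_apply A P u) A)\<^sup>2 \<le> (L2_set u A)\<^sup>2"
    unfolding L2_set_op_apply_proj_diff_sq[OF assms] L2_set_op_apply_proj_sq[OF assms(2)] by linarith
  then show ?thesis using power2_le_imp_le by force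
qed

lemma L2_set_op_mult_proj_diff_le:
  assumes "finite A" "is_projection A P"
  shows "L2_set (\<lambda>a. op_apply A (op_mult A P K) u a - u a) A
     \<le> L2_set (\<lambda>a. op_apply A K u a - u a) A + L2_set (\<lambda>a. op_apply A P u a - u a) A"
proof -
  have "L2_set (\<lambda>a. op_apply A (op_mult A P K) u a - u a) A =
        L2_set (\<lambda>a. op_apply A P (\<lambda>b. op_apply A K u b - u b) a + (op_apply A P u a - u a)) A"
    by (rule L2_set_cong) (auto simp: op_apply_op_mult op_apply_diff)
  also have "\<dots> \<le> L2_set (op_apply A P (\<lambda>b. op_apply A K u b - u b)) A + L2_set (\<lambda>a. op_apply A P u a - u a) A"
    by (rule L2_set_triangle_ineq)
  also have "\<dots> \<le> L2_set (\<lambda>a. op_apply A K u a - u a) A + L2_set (\<lambda>a. op_apply A P u a - u a) A"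
    using L2_set_op_apply_proj_le[OF assms] by simp
  finally show ?thesis .
qed

lemma gram_id_op: "finite A \<Longrightarrow> a \<in> A \<Longrightarrow> gram A id_op a b = id_op a b"
  unfolding gram_def using sum_id_op_left[of A a "\<lambda>c. id_op c b"] by (simp add: id_op_def eq_commute)

lemma gram_op_mult_proj:
  assumes "is_projection A P"
  shows "gram A (op_mult A P K) a b = (\<Sum>e\<in>A. \<Sum>f\<in>A. K e a * P e f * K f b)"
  using sum_op_apply_proj_mult[OF assms, of "\<lambda>e. K e a" "\<lambda>f. K f b"]
  by (simp add: gram_def op_mult_def op_apply_def)

lemma gram_op_mult_proj_add_compl:
  assumes "finite A" "is_projection A P"
  shows "gram A (op_mult A P K) a b + gram A (op_mult A (proj_compl P) K) a b = gram A K a b"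
proof -
  have "gram A (op_mult A P K) a b + gram A (op_mult A (proj_compl P) K) a b =
     (\<Sum>e\<in>A. \<Sum>f\<in>A. K e a * id_op e f * K f b)"
    unfolding gram_op_mult_proj[OF assms(2)] gram_op_mult_proj[OF is_projection_proj_compl[OF assms]]
    unfolding proj_compl_def by (simp add: algebra_simps sum_subtractf)
  also have "\<dots> = gram A K a b"
    unfolding gram_def
  proof (rule sum.cong[OF refl])
    fix e assume "e \<in> A"
    have "(\<Sum>f\<in>A. K e a * id_op e f * K f b) = K e a * (\<Sum>f\<in>A. id_op e f * K f b)"
      by (simp add: sum_distrib_left algebra_simps)
    then show "(\<Sum>f\<in>A. K e a * id_op e f * K f b) = K e a * K e b"
      using sum_id_op_left[OF assms(1) \<open>e \<in> A\<close>] by simp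
  qed
  finally show ?thesis .
qed

lemma L2_set_sq_ge_of_dist_le:
  assumes "finite A" "L2_set u A = 1" "L2_set (\<lambda>a. v a - u a) A \<le> e" "0 \<le> e"
  shows "1 - 2 * e \<le> (L2_set v A)\<^sup>2"
proof -
  have "L2_set u A \<le> L2_set v A + L2_set (\<lambda>a. u a - v a) A"
    using L2_set_triangle_ineq[of v "\<lambda>a. u a - v a" A] by simp
  moreover have "L2_set (\<lambda>a. u a - v a) A = L2_set (\<lambda>a. v a - u a) A"
    unfolding L2_set_def by (simp add: power2_commute)
  ultimately have "1 - e \<le> L2_set v A" using assms(2,3) by simp
  show ?thesis
  proof (cases "1 - e \<le> 0")
    case True then show ?thesis using assms(4) by (smt (verit) zero_le_power2)
  next
    case False
    then have "(1 - e)\<^sup>2 \<le> (L2_set v A)\<^sup>2"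
      using \<open>1 - e \<le> L2_set v A\<close> by (intro power_mono) auto
    moreover have "1 - 2 * e \<le> (1 - e)\<^sup>2" by (simp add: power2_eq_square algebra_simps)
    ultimately show ?thesis by linarith
  qed
qed

lemma psd_on_of_real:
  assumes "\<forall>a\<in>A. \<forall>b\<in>A. X a b = X b a" "\<And>u. 0 \<le> quad_form A X u"
  shows "psd_on A (\<lambda>a b. complex_of_real (X a b))"
  unfolding psd_on_def
proof (intro conjI allI ballI)
  fix a b assume "a \<in> A" "b \<in> A"
  then show "complex_of_real (X a b) = cnj (complex_of_real (X b a))" using assms(1) by simp
next
  fix v :: "'a \<Rightarrow> complex"
  have "Re (\<Sum>a\<in>A. \<Sum>b\<in>A. cnj (v a) * complex_of_real (X a b) * v b) =
     (\<Sum>a\<in>A. \<Sum>b\<in>A. Re (v a) * X a b * Re (v b)) + (\<Sum>a\<in>A. \<Sum>b\<in>A. Im (v a) * X a b * Im (v b))"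
    by (simp add: sum.distrib[symmetric] algebra_simps)
  also have "\<dots> = quad_form A X (\<lambda>a. Re (v a)) + quad_form A X (\<lambda>a. Im (v a))"
    unfolding quad_form_def by simp
  also have "\<dots> \<ge> 0" using assms(2) by simp
  finally show "0 \<le> Re (\<Sum>a\<in>A. \<Sum>b\<in>A. cnj (v a) * complex_of_real (X a b) * v b)" .
qed

section \<open>Decision trees as measurements\<close>

fun leaves :: "'s meq_tree \<Rightarrow> 's set" where
  "leaves (Leaf s) = {s}"
| "leaves (Node i j y z l r) = leaves l \<union> leaves r"

fun nodes :: "'s meq_tree \<Rightarrow> (nat \<times> nat \<times> bits \<times> bits) set" where
  "nodes (Leaf s) = {}"
| "nodes (Node i j y z l r) = insert (i, j, y, z) (nodes l \<union> nodes r)"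

lemma finite_leaves: "finite (leaves T)"
  by (induction T) auto

lemma leaves_nonempty: "leaves T \<noteq> {}"
  by (induction T) auto

lemma meq_eval_in_leaves: "meq_eval T x \<in> leaves T"
  by (induction T) auto

lemma meq_wf_nodes:
  "meq_wf k n T \<Longrightarrow> (i, j, y, z) \<in> nodes T \<Longrightarrow> i < k \<and> j < k \<and> length y = n \<and> length z = n"
  by (induction T) auto

lemma card_leaves_depth_one: "meq_depth T = 1 \<Longrightarrow> card (leaves T) \<le> 2"
proof (cases T)
  case (Node i j y z l r)
  assume "meq_depth T = 1"
  then obtain a b where "l = Leaf a" "r = Leaf b"
    using Node by (cases l; cases r) auto
  then show ?thesis using Node by (simp add: card_insert_if)
qed simp

text \<open>The referee's measurement: the outcome-s operator is the sum of the Gram operators of K over the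
  root-to-leaf paths ending in a leaf labelled s, where K is the product of the projections (or their
  complements) met along the path.\<close>
fun tree_povm ::
  "'a set \<Rightarrow> (nat \<Rightarrow> nat \<Rightarrow> bits \<Rightarrow> bits \<Rightarrow> 'a op) \<Rightarrow> 's meq_tree \<Rightarrow> 'a op \<Rightarrow> 's \<Rightarrow> 'a op"
  where
  "tree_povm A Q (Leaf s') K s = (if s = s' then gram A K else (\<lambda>a b. 0))"
| "tree_povm A Q (Node i j y z l r) K s =
     (\<lambda>a b. tree_povm A Q r (op_mult A (Q i j y z) K) s a b
          + tree_povm A Q l (op_mult A (proj_compl (Q i j y z)) K) s a b)"

fun path_op ::
  "'a set \<Rightarrow> (nat \<Rightarrow> nat \<Rightarrow> bits \<Rightarrow> bits \<Rightarrow> 'a op) \<Rightarrow> 's meq_tree \<Rightarrow> (nat \<Rightarrow> bits) \<Rightarrow> 'a op \<Rightarrow> 'a op"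
  where
  "path_op A Q (Leaf s) x K = K"
| "path_op A Q (Node i j y z l r) x K =
     (if xor_bits (x i) y = xor_bits (x j) z then path_op A Q r x (op_mult A (Q i j y z) K)
      else path_op A Q l x (op_mult A (proj_compl (Q i j y z)) K))"

definition branch_proj ::
  "(nat \<Rightarrow> nat \<Rightarrow> bits \<Rightarrow> bits \<Rightarrow> 'a op) \<Rightarrow> (nat \<Rightarrow> bits) \<Rightarrow> nat \<Rightarrow> nat \<Rightarrow> bits \<Rightarrow> bits \<Rightarrow> 'a op"
  where
  "branch_proj Q x i j y z =
     (if xor_bits (x i) y = xor_bits (x j) z then Q i j y z else proj_compl (Q i j y z))"

lemma sum_tree_povm:
  assumes "finite A" "\<forall>(i,j,y,z)\<in>nodes T. is_projection A (Q i j y z)" "finite F" "leaves T \<subseteq> F"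
  shows "(\<Sum>s\<in>F. tree_povm A Q T K s a b) = gram A K a b"
  using assms(2,4)
proof (induction T arbitrary: K)
  case (Leaf s')
  then show ?case using assms(3) by (simp add: if_distrib[of "\<lambda>X. X a b"] cong: if_cong)
next
  case (Node i j y z l r)
  then show ?case
    using gram_op_mult_proj_add_compl[OF assms(1)] by (simp add: sum.distrib)
qed

lemma tree_povm_outside_leaves: "s \<notin> leaves T \<Longrightarrow> tree_povm A Q T K s a b = 0"
  by (induction T arbitrary: K) auto

lemma tree_povm_sym: "tree_povm A Q T K s a b = tree_povm A Q T K s b a"
  by (induction T arbitrary: K) (auto simp: gram_def mult.commute)

lemma quad_form_tree_povm_nonneg: "0 \<le> quad_form A (tree_povm A Q T K s) v"
proof (induction T arbitrary: K)
  case (Leaf s')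
  then show ?case using quad_form_gram[of A K v] by (auto simp: quad_form_def)
next
  case (Node i j y z l r)
  then show ?case by (simp add: quad_form_add)
qed

lemma L2_set_path_op_sq_le:
  "(L2_set (op_apply A (path_op A Q T x K) v) A)\<^sup>2 \<le> quad_form A (tree_povm A Q T K (meq_eval T x)) v"
proof (induction T arbitrary: K)
  case (Leaf s)
  then show ?case by (simp add: quad_form_gram)
next
  case (Node i j y z l r)
  let ?K\<^sub>r = "op_mult A (Q i j y z) K" and ?K\<^sub>l = "op_mult A (proj_compl (Q i j y z)) K"
  show ?case
  proof (cases "xor_bits (x i) y = xor_bits (x j) z")
    case True
    then show ?thesis
      using Node.IH(2)[of ?K\<^sub>r] quad_form_tree_povm_nonneg[of A Q l ?K\<^sub>l "meq_eval r x" v]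
      by (simp add: quad_form_add add_increasing2)
  next
    case False
    then show ?thesis
      using Node.IH(1)[of ?K\<^sub>l] quad_form_tree_povm_nonneg[of A Q r ?K\<^sub>r "meq_eval l x" v]
      by (simp add: quad_form_add add_increasing)
  qed
qed

lemma L2_set_path_op_diff_le:
  assumes "finite A" "0 \<le> \<epsilon>"
    and "\<forall>(i,j,y,z)\<in>nodes T. is_projection A (Q i j y z) \<and>
           L2_set (\<lambda>a. op_apply A (branch_proj Q x i j y z) v a - v a) A \<le> \<epsilon>"
  shows "L2_set (\<lambda>a. op_apply A (path_op A Q T x K) v a - v a) A
           \<le> L2_set (\<lambda>a. op_apply A K v a - v a) A + real (meq_depth T) * \<epsilon>"
  using assms(3)
proof (induction T arbitrary: K)
  case (Leaf s)
  then show ?case by simp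
next
  case (Node i j y z l r)
  let ?P = "branch_proj Q x i j y z"
  let ?t = "if xor_bits (x i) y = xor_bits (x j) z then r else l"
  have "path_op A Q (Node i j y z l r) x K = path_op A Q ?t x (op_mult A ?P K)"
    by (simp add: branch_proj_def)
  moreover have "is_projection A ?P"
    using Node.prems is_projection_proj_compl[OF assms(1)] by (auto simp: branch_proj_def)
  moreover have "L2_set (\<lambda>a. op_apply A (path_op A Q ?t x (op_mult A ?P K)) v a - v a) A
      \<le> L2_set (\<lambda>a. op_apply A (op_mult A ?P K) v a - v a) A + real (meq_depth ?t) * \<epsilon>"
    using Node by (cases "xor_bits (x i) y = xor_bits (x j) z") auto
  moreover have "real (meq_depth ?t) * \<epsilon> + \<epsilon> \<le> real (meq_depth (Node i j y z l r)) * \<epsilon>"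
    using assms(2) by (auto simp: algebra_simps intro!: mult_left_mono)
  ultimately show ?case
    using L2_set_op_mult_proj_diff_le[OF assms(1), of ?P K v] Node.prems by fastforce
qed

lemma quad_form_tree_povm_meq_eval_ge:
  assumes "finite A" "0 \<le> \<epsilon>" "L2_set v A = 1"
    and "\<forall>(i,j,y,z)\<in>nodes T. is_projection A (Q i j y z) \<and>
           L2_set (\<lambda>a. op_apply A (branch_proj Q x i j y z) v a - v a) A \<le> \<epsilon>"
  shows "1 - 2 * real (meq_depth T) * \<epsilon> \<le> quad_form A (tree_povm A Q T id_op (meq_eval T x)) v"
proof -
  have "L2_set (\<lambda>a. op_apply A id_op v a - v a) A = 0"
    by (rule L2_set_0') (simp add: op_apply_id_op[OF assms(1)])
  then have "L2_set (\<lambda>a. op_apply A (path_op A Q T x id_op) v a - v a) A \<le> real (meq_depth T) * \<epsilon>"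
    using L2_set_path_op_diff_le[OF assms(1,2,4), of id_op] by simp
  then have "1 - 2 * (real (meq_depth T) * \<epsilon>) \<le> (L2_set (op_apply A (path_op A Q T x id_op) v) A)\<^sup>2"
    using assms by (intro L2_set_sq_ge_of_dist_le) auto
  then show ?thesis
    using L2_set_path_op_sq_le[of A Q T x id_op v] by simp
qed

section \<open>Balanced codes\<close>

fun dot_bits :: "bits \<Rightarrow> bits \<Rightarrow> bool" where
  "dot_bits (a # as) (b # bs) = ((a \<and> b) \<noteq> dot_bits as bs)"
| "dot_bits _ _ = False"

lemma length_xor_bits [simp]: "length (xor_bits a b) = min (length a) (length b)"
  unfolding xor_bits_def by simp

lemma xor_bits_Cons [simp]: "xor_bits (a # as) (b # bs) = (a \<noteq> b) # xor_bits as bs"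
  unfolding xor_bits_def by simp

lemma xor_bits_Nil [simp]: "xor_bits [] bs = []" "xor_bits as [] = []"
  unfolding xor_bits_def by auto

lemma dot_bits_xor_bits:
  "length a = length b \<Longrightarrow> dot_bits c (xor_bits a b) = (dot_bits c a \<noteq> dot_bits c b)"
proof (induction c arbitrary: a b)
  case (Cons e c)
  then show ?case by (cases a; cases b) auto
qed simp

lemma xor_bits_left_cancel:
  "length y = length a \<Longrightarrow> length z = length a \<Longrightarrow> xor_bits a y = xor_bits a z \<longleftrightarrow> y = z"
proof (induction a arbitrary: y z)
  case (Cons e a)
  then show ?case by (cases y; cases z) auto
qed simp

lemma length_bitstrings: "w \<in> bitstrings n \<Longrightarrow> length w = n"
  unfolding bitstrings_def by simp

lemma finite_bitstrings [simp]: "finite (bitstrings n)"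
  unfolding bitstrings_def using finite_lists_length_eq[of "UNIV :: bool set" n] by simp

lemma card_bitstrings: "card (bitstrings n) = 2 ^ n"
  unfolding bitstrings_def using card_lists_length_eq[of "UNIV :: bool set" n] by simp

lemma sum_bitstrings_Suc:
  fixes F :: "bits \<Rightarrow> 'b::comm_monoid_add"
  shows "(\<Sum>c\<in>bitstrings (Suc n). F c) = (\<Sum>c\<in>bitstrings n. F (True # c) + F (False # c))"
proof -
  have split: "bitstrings (Suc n) = (\<lambda>c. True # c) ` bitstrings n \<union> (\<lambda>c. False # c) ` bitstrings n"
    unfolding bitstrings_def by (auto simp: length_Suc_conv image_iff)
  have "(\<Sum>c\<in>bitstrings (Suc n). F c) =
      (\<Sum>c\<in>(\<lambda>c. True # c) ` bitstrings n. F c) + (\<Sum>c\<in>(\<lambda>c. False # c) ` bitstrings n. F c)"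
    unfolding split by (rule sum.union_disjoint) auto
  also have "\<dots> = (\<Sum>c\<in>bitstrings n. F (True # c)) + (\<Sum>c\<in>bitstrings n. F (False # c))"
    by (simp add: sum.reindex inj_on_def)
  finally show ?thesis by (simp add: sum.distrib)
qed

lemma sum_bitstrings_dot_bits_differ:
  fixes g :: "bool \<Rightarrow> real"
  assumes "length u = n" "length v = n" "u \<noteq> v"
  shows "(\<Sum>c\<in>bitstrings n. g (dot_bits c u \<noteq> dot_bits c v)) = 2 ^ (n - 1) * (g True + g False)"
  using assms
proof (induction n arbitrary: u v g)
  case (Suc n)
  obtain a u' where u: "u = a # u'" "length u' = n" using Suc.prems by (cases u) auto
  obtain b v' where v: "v = b # v'" "length v' = n" using Suc.prems by (cases v) auto
  have eq: "(\<Sum>c\<in>bitstrings (Suc n). g (dot_bits c u \<noteq> dot_bits c v)) =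
     (\<Sum>c\<in>bitstrings n. g ((a \<noteq> b) \<noteq> (dot_bits c u' \<noteq> dot_bits c v')) + g (dot_bits c u' \<noteq> dot_bits c v'))"
    unfolding sum_bitstrings_Suc u v by (rule sum.cong[OF refl]) (auto intro: arg_cong[where f=g])
  show ?case
  proof (cases "u' = v'")
    case True
    then have "a \<noteq> b" using Suc.prems u v by auto
    then show ?thesis unfolding eq using True by (simp add: card_bitstrings)
  next
    case False
    then have "n \<ge> 1" using u v by (cases n) auto
    have "(\<Sum>c\<in>bitstrings n. g ((a \<noteq> b) \<noteq> (dot_bits c u' \<noteq> dot_bits c v')) + g (dot_bits c u' \<noteq> dot_bits c v'))
      = (\<Sum>c\<in>bitstrings n. (\<lambda>t. g ((a \<noteq> b) \<noteq> t)) (dot_bits c u' \<noteq> dot_bits c v'))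
        + (\<Sum>c\<in>bitstrings n. g (dot_bits c u' \<noteq> dot_bits c v'))"
      by (simp add: sum.distrib)
    also have "\<dots> = 2 ^ (n - 1) * (g True + g False) + 2 ^ (n - 1) * (g True + g False)"
      using Suc.IH[OF u(2) v(2) False, of g] Suc.IH[OF u(2) v(2) False, of "\<lambda>t. g (\<not> t)"]
      by (cases "a = b") (auto simp: algebra_simps)
    also have "\<dots> = 2 ^ (Suc n - 1) * (g True + g False)"
      using \<open>n \<ge> 1\<close> by (cases n) auto
    finally show ?thesis unfolding eq .
  qed
qed simp

definition disagreements :: "nat \<Rightarrow> (nat \<Rightarrow> bits) \<Rightarrow> bits \<Rightarrow> bits \<Rightarrow> nat" where
  "disagreements N C w\<^sub>1 w\<^sub>2 = card {l\<in>{..<N}. dot_bits (C l) w\<^sub>1 \<noteq> dot_bits (C l) w\<^sub>2}"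

text \<open>A message w is encoded by the parities c_l \<cdot> w, l < N; the code is balanced if the encodings of
  distinct messages are at relative distance between 1/4 and 3/4.\<close>
definition balanced_code :: "nat \<Rightarrow> nat \<Rightarrow> (nat \<Rightarrow> bits) \<Rightarrow> bool" where
  "balanced_code n N C \<longleftrightarrow> (\<forall>l<N. C l \<in> bitstrings n) \<and>
     (\<forall>w\<^sub>1\<in>bitstrings n. \<forall>w\<^sub>2\<in>bitstrings n. w\<^sub>1 \<noteq> w\<^sub>2 \<longrightarrow>
        N \<le> 4 * disagreements N C w\<^sub>1 w\<^sub>2 \<and> 4 * disagreements N C w\<^sub>1 w\<^sub>2 \<le> 3 * N)"

lemma prod_if_eq_power:
  fixes a :: real
  shows "finite L \<Longrightarrow> (\<Prod>l\<in>L. if P l then a else 1) = a ^ card {l\<in>L. P l}"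
  by (simp add: prod.If_cases Int_def)

lemma sum_codes_prod_differ:
  fixes g :: "bool \<Rightarrow> real"
  assumes "n \<ge> 1" "w\<^sub>1 \<in> bitstrings n" "w\<^sub>2 \<in> bitstrings n" "w\<^sub>1 \<noteq> w\<^sub>2"
  shows "(\<Sum>C\<in>PiE {..<N} (\<lambda>_. bitstrings n). \<Prod>l<N. g (dot_bits (C l) w\<^sub>1 \<noteq> dot_bits (C l) w\<^sub>2))
    = (2 ^ (n - 1) * (g True + g False)) ^ N"
  using prod_sum_PiE[of "{..<N}" "\<lambda>_. bitstrings n" "\<lambda>_ c. g (dot_bits c w\<^sub>1 \<noteq> dot_bits c w\<^sub>2)"]
    sum_bitstrings_dot_bits_differ[of w\<^sub>1 n w\<^sub>2 g] assms
  by (simp add: length_bitstrings)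

text \<open>The exponential moments behind the Chernoff-type bound on the number of disagreements.\<close>
lemma sum_codes_three_pow_disagreements:
  assumes "n \<ge> 1" "w\<^sub>1 \<in> bitstrings n" "w\<^sub>2 \<in> bitstrings n" "w\<^sub>1 \<noteq> w\<^sub>2"
  shows "(\<Sum>C\<in>PiE {..<N} (\<lambda>_. bitstrings n). (3::real) ^ disagreements N C w\<^sub>1 w\<^sub>2) = (2 ^ (n+1)) ^ N"
    and "(\<Sum>C\<in>PiE {..<N} (\<lambda>_. bitstrings n). (3::real) ^ (N - disagreements N C w\<^sub>1 w\<^sub>2)) = (2 ^ (n+1)) ^ N"
proof -
  have four: "(2::real) ^ (n - 1) * 4 = 2 ^ (n + 1)"
    using assms(1) by (cases n) auto
  have "(\<Sum>C\<in>PiE {..<N} (\<lambda>_. bitstrings n). (3::real) ^ disagreements N C w\<^sub>1 w\<^sub>2) =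
      (\<Sum>C\<in>PiE {..<N} (\<lambda>_. bitstrings n).
         \<Prod>l<N. (\<lambda>t. if t then 3 else 1) (dot_bits (C l) w\<^sub>1 \<noteq> dot_bits (C l) w\<^sub>2))"
    unfolding disagreements_def by (simp add: prod_if_eq_power)
  also have "\<dots> = (2 ^ (n - 1) * 4) ^ N"
    using sum_codes_prod_differ[OF assms, of "\<lambda>t. if t then 3 else 1" N] by simp
  finally show "(\<Sum>C\<in>PiE {..<N} (\<lambda>_. bitstrings n). (3::real) ^ disagreements N C w\<^sub>1 w\<^sub>2) = (2 ^ (n+1)) ^ N"
    by (simp only: four)
  have "(3::real) ^ (N - disagreements N C w\<^sub>1 w\<^sub>2) =
      (\<Prod>l<N. (\<lambda>t. if t then 1 else 3) (dot_bits (C l) w\<^sub>1 \<noteq> dot_bits (C l) w\<^sub>2))" for C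
  proof -
    have agree: "{l\<in>{..<N}. dot_bits (C l) w\<^sub>1 = dot_bits (C l) w\<^sub>2}
        = {..<N} - {l\<in>{..<N}. dot_bits (C l) w\<^sub>1 \<noteq> dot_bits (C l) w\<^sub>2}"
      by auto
    have "N - disagreements N C w\<^sub>1 w\<^sub>2 = card {l\<in>{..<N}. dot_bits (C l) w\<^sub>1 = dot_bits (C l) w\<^sub>2}"
      unfolding disagreements_def agree by (subst card_Diff_subset) auto
    moreover have "(\<Prod>l<N. (\<lambda>t. if t then 1 else 3) (dot_bits (C l) w\<^sub>1 \<noteq> dot_bits (C l) w\<^sub>2)) =
        (\<Prod>l<N. if dot_bits (C l) w\<^sub>1 = dot_bits (C l) w\<^sub>2 then (3::real) else 1)"
      by (rule prod.cong) auto
    ultimately show ?thesis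
      using prod_if_eq_power[of "{..<N}" "\<lambda>l. dot_bits (C l) w\<^sub>1 = dot_bits (C l) w\<^sub>2" 3] by simp
  qed
  then have "(\<Sum>C\<in>PiE {..<N} (\<lambda>_. bitstrings n). (3::real) ^ (N - disagreements N C w\<^sub>1 w\<^sub>2)) =
      (2 ^ (n - 1) * 4) ^ N"
    using sum_codes_prod_differ[OF assms, of "\<lambda>t. if t then 1 else 3" N] by simp
  then show "(\<Sum>C\<in>PiE {..<N} (\<lambda>_. bitstrings n). (3::real) ^ (N - disagreements N C w\<^sub>1 w\<^sub>2)) = (2 ^ (n+1)) ^ N"
    by (simp only: four)
qed

lemma unbalanced_le_three_pow:
  assumes "\<not> (K \<le> d \<and> d \<le> 3 * K)"
  shows "(27::real) ^ K \<le> 3 ^ d + 3 ^ (4 * K - d)"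
proof -
  have "(27::real) ^ K = 3 ^ (3 * K)" by (simp add: power_mult)
  moreover have "3 * K \<le> d \<or> 3 * K \<le> 4 * K - d" using assms by auto
  ultimately show ?thesis
    by (smt (verit, best) one_le_numeral power_increasing zero_le_power)
qed

lemma card_unbalanced_codes_le:
  fixes K :: nat
  assumes "n \<ge> 1" "w\<^sub>1 \<in> bitstrings n" "w\<^sub>2 \<in> bitstrings n" "w\<^sub>1 \<noteq> w\<^sub>2"
  defines "d \<equiv> \<lambda>C. disagreements (4 * K) C w\<^sub>1 w\<^sub>2"
  shows "real (card {C\<in>PiE {..<4 * K} (\<lambda>_. bitstrings n). \<not> (K \<le> d C \<and> d C \<le> 3 * K)}) * 27 ^ K
           \<le> 2 * (2 ^ (n+1)) ^ (4 * K)"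
proof -
  let ?Cd = "PiE {..<4 * K} (\<lambda>_. bitstrings n)"
  let ?B = "{C\<in>?Cd. \<not> (K \<le> d C \<and> d C \<le> 3 * K)}"
  have fin: "finite ?Cd" by (simp add: finite_PiE)
  have "real (card ?B) * 27 ^ K = (\<Sum>C\<in>?B. 27 ^ K)" by simp
  also have "\<dots> \<le> (\<Sum>C\<in>?B. 3 ^ d C + 3 ^ (4 * K - d C))"
    by (intro sum_mono unbalanced_le_three_pow) simp
  also have "\<dots> \<le> (\<Sum>C\<in>?Cd. 3 ^ d C + 3 ^ (4 * K - d C))"
    using fin by (intro sum_mono2) auto
  also have "\<dots> = 2 * (2 ^ (n+1)) ^ (4 * K)"
    unfolding sum.distrib d_def sum_codes_three_pow_disagreements[OF assms(1-4)] by simp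
  finally show ?thesis .
qed

lemma code_counting_ineq:
  assumes "n \<ge> 1" "8 * n \<le> K"
  shows "2 * 4 ^ n * 16 ^ K < (27::nat) ^ K"
proof -
  have "(2::nat) \<le> 2 ^ n" using assms(1)
    using power_increasing[of 1 n "2::nat"] by simp
  moreover have "(8::nat) ^ n = 2 ^ n * 4 ^ n" by (simp add: power_mult_distrib[symmetric])
  ultimately have e: "2 * 4 ^ n \<le> (8::nat) ^ n" by simp
  have a: "2 * 4 ^ n * (16::nat) ^ (8 * n) < 27 ^ (8 * n)"
  proof -
    have "2 * 4 ^ n * (16::nat) ^ (8 * n) \<le> 8 ^ n * (16 ^ 8) ^ n"
      unfolding power_mult using e by (rule mult_right_mono) simp
    also have "\<dots> = (8 * 16 ^ 8) ^ n" by (simp only: power_mult_distrib)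
    also have "\<dots> < (27 ^ 8) ^ n"
      using assms(1) by (intro power_strict_mono) auto
    finally show ?thesis by (simp only: power_mult)
  qed
  have b: "(16::nat) ^ (K - 8 * n) \<le> 27 ^ (K - 8 * n)" by (intro power_mono) auto
  have "2 * 4 ^ n * 16 ^ K = (2 * 4 ^ n * (16::nat) ^ (8 * n)) * 16 ^ (K - 8 * n)"
    using assms(2) by (simp only: mult.assoc power_add[symmetric]) simp
  also have "\<dots> < 27 ^ (8 * n) * 27 ^ (K - 8 * n)"
    by (rule mult_less_le_imp_less[OF a b]) auto
  also have "\<dots> = 27 ^ K" using assms(2) by (simp only: power_add[symmetric]) simp
  finally show ?thesis .
qed

text \<open>Probabilistic method: for each of the fewer than 4^n pairs of distinct messages, a fraction below
  4^-n of all codes is unbalanced on that pair.\<close>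
lemma balanced_code_exists:
  assumes n: "n \<ge> 1" and K: "8 * n \<le> K"
  shows "\<exists>C. balanced_code n (4 * K) C"
proof (rule ccontr)
  define Cd where "Cd = PiE {..<4 * K} (\<lambda>_. bitstrings n)"
  define Pr where "Pr = {p \<in> bitstrings n \<times> bitstrings n. fst p \<noteq> snd p}"
  define bad where "bad p = {C\<in>Cd. \<not> (K \<le> disagreements (4 * K) C (fst p) (snd p)
                                    \<and> disagreements (4 * K) C (fst p) (snd p) \<le> 3 * K)}" for p
  assume "\<nexists>C. balanced_code n (4 * K) C"
  then have "Cd \<subseteq> (\<Union>p\<in>Pr. bad p)"
    unfolding Cd_def Pr_def bad_def balanced_code_def by fastforce
  moreover have "finite Pr" "finite Cd"
    unfolding Pr_def Cd_def by (auto simp: finite_PiE)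
  ultimately have "card Cd \<le> (\<Sum>p\<in>Pr. card (bad p))"
    using card_mono[of "\<Union>p\<in>Pr. bad p" Cd] card_UN_le[of Pr bad] unfolding bad_def by force
  then have "real (card Cd) \<le> (\<Sum>p\<in>Pr. real (card (bad p)))"
    by (metis of_nat_le_iff of_nat_sum)
  also have "\<dots> \<le> (\<Sum>p\<in>Pr. 2 * (2 ^ (n+1)) ^ (4 * K) / 27 ^ K)"
  proof (intro sum_mono)
    fix p assume "p \<in> Pr"
    then show "real (card (bad p)) \<le> 2 * (2 ^ (n+1)) ^ (4 * K) / 27 ^ K"
      using card_unbalanced_codes_le[OF n, of "fst p" "snd p" K] unfolding Pr_def bad_def Cd_def
      by (auto simp: pos_le_divide_eq)
  qed
  also have "\<dots> \<le> 4 ^ n * (2 * (2 ^ (n+1)) ^ (4 * K) / 27 ^ K)"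
  proof -
    have "card Pr \<le> card (bitstrings n \<times> bitstrings n)"
      unfolding Pr_def by (rule card_mono) auto
    also have "\<dots> = 4 ^ n" by (simp add: card_cartesian_product card_bitstrings power_mult_distrib[symmetric])
    finally have "real (card Pr) \<le> 4 ^ n"
      by (metis of_nat_le_iff of_nat_numeral of_nat_power)
    then show ?thesis unfolding sum_constant by (intro mult_right_mono) auto
  qed
  also have "\<dots> = real (2 * 4 ^ n * 16 ^ K) * (2 ^ n) ^ (4 * K) / 27 ^ K"
    by (simp add: power_mult_distrib power_mult mult.assoc mult.left_commute)
  also have "\<dots> < real (27 ^ K) * (2 ^ n) ^ (4 * K) / 27 ^ K"
    using code_counting_ineq[OF n K, folded of_nat_less_iff[where 'a=real]]
    by (intro divide_strict_right_mono mult_strict_right_mono) auto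
  also have "\<dots> = real (card Cd)"
    unfolding Cd_def by (simp add: card_PiE card_bitstrings)
  finally show False by simp
qed

section \<open>Fingerprints and swap tests\<close>

definition pm_sign :: "bool \<Rightarrow> real" where
  "pm_sign b = (if b then -1 else 1)"

lemma pm_sign_mult_self [simp]: "pm_sign b * pm_sign b = 1"
  unfolding pm_sign_def by auto

lemma pm_sign_neq: "pm_sign (a \<noteq> b) = pm_sign a * pm_sign b"
  unfolding pm_sign_def by auto

lemma pm_sign_eq_iff: "pm_sign a = pm_sign b \<longleftrightarrow> a = b"
  unfolding pm_sign_def by auto

lemma pm_sign_eq_1_iff: "pm_sign a = 1 \<longleftrightarrow> \<not> a"
  unfolding pm_sign_def by auto

lemma sum_pm_sign: "(\<Sum>l<(N::nat). pm_sign (P l)) = real N - 2 * real (card {l\<in>{..<N}. P l})"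
proof -
  have "(\<Sum>l<N. pm_sign (P l)) = (\<Sum>l<N. 1 - 2 * (if P l then 1 else 0))"
    unfolding pm_sign_def by (rule sum.cong) auto
  also have "\<dots> = real N - 2 * (\<Sum>l<N. (if P l then 1 else 0))"
    by (simp add: sum_subtractf sum_distrib_left)
  also have "(\<Sum>l<N. (if P l then 1 else 0::real)) = real (card {l\<in>{..<N}. P l})"
    by (simp add: sum.inter_filter[symmetric])
  finally show ?thesis .
qed

definition swap_on :: "nat set \<Rightarrow> (nat \<Rightarrow> nat) \<Rightarrow> (nat \<Rightarrow> nat) \<Rightarrow> nat \<Rightarrow> nat" where
  "swap_on T t t' = (\<lambda>r. if r \<in> T then t' r else t r)"

lemma swap_on_swap_on:
  "swap_on T' (swap_on T t t') (swap_on T t' t) = swap_on (sym_diff T T') t t'"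
  unfolding swap_on_def by auto

lemma swap_on_empty [simp]: "swap_on {} t t' = t"
  unfolding swap_on_def by simp

lemma swap_on_PiE: "t \<in> PiE I B \<Longrightarrow> t' \<in> PiE I B \<Longrightarrow> swap_on T t t' \<in> PiE I B"
  unfolding swap_on_def PiE_def Pi_def extensional_def by auto

lemma sum_Pow_symdiff:
  fixes g :: "'a set \<Rightarrow> 'b::comm_monoid_add"
  assumes "T \<subseteq> U"
  shows "(\<Sum>T'\<in>Pow U. g (sym_diff T T')) = (\<Sum>S\<in>Pow U. g S)"
  by (rule sum.reindex_bij_witness[where i="sym_diff T" and j="sym_diff T"])
     (use assms in auto)

lemma prod_remove_two:
  fixes F :: "'a \<Rightarrow> 'b::comm_monoid_mult"
  assumes "finite L" "i \<in> L" "j \<in> L" "i \<noteq> j"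
  shows "(\<Prod>l\<in>L. F l) = F i * F j * (\<Prod>l\<in>L - {i, j}. F l)"
proof -
  have "(\<Prod>l\<in>L. F l) = F i * (\<Prod>l\<in>L - {i}. F l)" using assms by (simp add: prod.remove)
  also have "(\<Prod>l\<in>L - {i}. F l) = F j * (\<Prod>l\<in>L - {i} - {j}. F l)"
    using assms by (intro prod.remove) auto
  moreover have "L - {i} - {j} = L - {i, j}" by auto
  ultimately show ?thesis by (simp add: mult.assoc)
qed

text \<open>Each player sends R copies of a Hadamard-type fingerprint of its input with respect to the code c
  of 2^m words: the basis index d < 2^(m R) encodes, via dec, an R-tuple of positions in the code, and
  the amplitude of d is the product of the signs (-1)^(c_l \<cdot> w) of the encoded positions.\<close>
locale fingerprint_scheme =
  fixes n k m R :: nat and c :: "nat \<Rightarrow> bits"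
    and dec :: "nat \<Rightarrow> nat \<Rightarrow> nat" and enc :: "(nat \<Rightarrow> nat) \<Rightarrow> nat"
  assumes code: "balanced_code n (2^m) c"
    and dec_in: "\<And>d. d < 2^(m*R) \<Longrightarrow> dec d \<in> PiE {..<R} (\<lambda>_. {..<2^m})"
    and enc_in: "\<And>t. t \<in> PiE {..<R} (\<lambda>_. {..<2^m}) \<Longrightarrow> enc t < 2^(m*R)"
    and enc_dec: "\<And>d. d < 2^(m*R) \<Longrightarrow> enc (dec d) = d"
    and dec_enc: "\<And>t. t \<in> PiE {..<R} (\<lambda>_. {..<2^m}) \<Longrightarrow> dec (enc t) = t"
begin

abbreviation "N \<equiv> (2::nat)^m"
abbreviation "M \<equiv> (2::nat)^(m*R)"
abbreviation "Tup \<equiv> PiE {..<R} (\<lambda>_. {..<N})"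

definition joint_basis :: "(nat \<Rightarrow> nat) set" where
  "joint_basis = PiE {..<k} (\<lambda>_. {..<M})"

definition code_sign :: "bits \<Rightarrow> nat \<Rightarrow> real" where
  "code_sign w d = (\<Prod>r<R. pm_sign (dot_bits (c (dec d r)) w))"

definition fingerprint :: "bits \<Rightarrow> nat \<Rightarrow> real" where
  "fingerprint w d = code_sign w d / sqrt (real M)"

definition joint_fingerprint :: "(nat \<Rightarrow> bits) \<Rightarrow> (nat \<Rightarrow> nat) \<Rightarrow> real" where
  "joint_fingerprint x a = (\<Prod>l<k. fingerprint (x l) (a l))"

definition partial_swap :: "nat \<Rightarrow> nat \<Rightarrow> nat set \<Rightarrow> (nat \<Rightarrow> nat) \<Rightarrow> nat \<Rightarrow> nat" where
  "partial_swap i j T a =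
     a(i := enc (swap_on T (dec (a i)) (dec (a j))), j := enc (swap_on T (dec (a j)) (dec (a i))))"

definition shift_sign :: "nat \<Rightarrow> nat \<Rightarrow> bits \<Rightarrow> bits \<Rightarrow> (nat \<Rightarrow> nat) \<Rightarrow> real" where
  "shift_sign i j y z a = code_sign y (a i) * code_sign z (a j)"

text \<open>The swap test on registers i and j after shifting x_i by y and x_j by z: the product over the R
  copies of (1 + SWAP)/2, conjugated by the diagonal sign operator that implements the shift.\<close>
definition swap_test_proj :: "nat \<Rightarrow> nat \<Rightarrow> bits \<Rightarrow> bits \<Rightarrow> (nat \<Rightarrow> nat) op" where
  "swap_test_proj i j y z a b =
     (\<Sum>T\<in>Pow {..<R}. if b = partial_swap i j T a then shift_sign i j y z a * shift_sign i j y z b else 0) / 2 ^ R"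

definition node_proj :: "nat \<Rightarrow> nat \<Rightarrow> bits \<Rightarrow> bits \<Rightarrow> (nat \<Rightarrow> nat) op" where
  "node_proj i j y z = (if i = j then (if y = z then id_op else (\<lambda>a b. 0)) else swap_test_proj i j y z)"

definition shifted_sign :: "(nat \<Rightarrow> bits) \<Rightarrow> nat \<Rightarrow> nat \<Rightarrow> bits \<Rightarrow> bits \<Rightarrow> nat \<Rightarrow> real" where
  "shifted_sign x i j y z l =
     pm_sign ((dot_bits (c l) (x i) \<noteq> dot_bits (c l) y) \<noteq> (dot_bits (c l) (x j) \<noteq> dot_bits (c l) z))"

definition subset_sign :: "(nat \<Rightarrow> bits) \<Rightarrow> nat \<Rightarrow> nat \<Rightarrow> bits \<Rightarrow> bits \<Rightarrow> nat set \<Rightarrow> nat \<Rightarrow> real" where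
  "subset_sign x i j y z T d = (\<Prod>r<R. if r \<in> T then shifted_sign x i j y z (dec d r) else 1)"

lemma finite_joint_basis [simp]: "finite joint_basis"
  unfolding joint_basis_def by (simp add: finite_PiE)

lemma mem_joint_basis_iff: "a \<in> joint_basis \<longleftrightarrow> (\<forall>l<k. a l < M) \<and> (\<forall>l. l \<ge> k \<longrightarrow> a l = undefined)"
  unfolding joint_basis_def PiE_def Pi_def extensional_def by auto

lemma code_sign_mult_self [simp]: "code_sign w d * code_sign w d = 1"
  unfolding code_sign_def by (simp add: prod.distrib[symmetric])

lemma shift_sign_mult_self [simp]: "shift_sign i j y z a * shift_sign i j y z a = 1"
  unfolding shift_sign_def by (metis mult.commute mult.left_commute mult_1 code_sign_mult_self)

context
  fixes i j assumes ij: "i < k" "j < k" "i \<noteq> j"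
begin

lemma dec_in_Tup: "a \<in> joint_basis \<Longrightarrow> l < k \<Longrightarrow> dec (a l) \<in> Tup"
  using dec_in unfolding mem_joint_basis_iff by auto

lemma partial_swap_in_joint_basis:
  assumes "a \<in> joint_basis"
  shows "partial_swap i j T a \<in> joint_basis"
proof -
  have "enc (swap_on T (dec (a i)) (dec (a j))) < M" "enc (swap_on T (dec (a j)) (dec (a i))) < M"
    using enc_in swap_on_PiE dec_in_Tup[OF assms] ij by auto
  then show ?thesis using assms ij unfolding mem_joint_basis_iff partial_swap_def by auto
qed

lemma dec_partial_swap:
  assumes "a \<in> joint_basis"
  shows "dec (partial_swap i j T a i) = swap_on T (dec (a i)) (dec (a j))"
    and "dec (partial_swap i j T a j) = swap_on T (dec (a j)) (dec (a i))"
  using ij dec_enc swap_on_PiE dec_in_Tup[OF assms] unfolding partial_swap_def by auto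

lemma partial_swap_other: "l \<noteq> i \<Longrightarrow> l \<noteq> j \<Longrightarrow> partial_swap i j T a l = a l"
  unfolding partial_swap_def by auto

lemma partial_swap_partial_swap:
  assumes "a \<in> joint_basis"
  shows "partial_swap i j T' (partial_swap i j T a) = partial_swap i j (sym_diff T T') a"
proof
  fix l
  show "partial_swap i j T' (partial_swap i j T a) l = partial_swap i j (sym_diff T T') a l"
    using ij unfolding partial_swap_def[of _ _ T'] dec_partial_swap[OF assms]
    by (cases "l = i"; cases "l = j") (auto simp: swap_on_swap_on[symmetric] partial_swap_def)
qed

lemma partial_swap_empty: "a \<in> joint_basis \<Longrightarrow> partial_swap i j {} a = a"
  using ij enc_dec unfolding mem_joint_basis_iff partial_swap_def by auto

lemma partial_swap_eq_iff:
  assumes "a \<in> joint_basis" "b \<in> joint_basis"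
  shows "b = partial_swap i j T a \<longleftrightarrow> a = partial_swap i j T b"
  using partial_swap_partial_swap[of _ T T] partial_swap_empty assms by auto

lemma sum_partial_swap_mult:
  assumes a: "a \<in> joint_basis" and v: "\<And>e. v e * v e = (1::real)"
  shows "(\<Sum>e\<in>joint_basis. (if e = partial_swap i j T a then v a * v e else 0) *
                            (if b = partial_swap i j T' e then v e * v b else 0))
       = (if b = partial_swap i j (sym_diff T T') a then v a * v b else 0)"
proof -
  have "(\<Sum>e\<in>joint_basis. (if e = partial_swap i j T a then v a * v e else 0) *
                          (if b = partial_swap i j T' e then v e * v b else 0))
     = (v a * v (partial_swap i j T a)) *
       (if b = partial_swap i j T' (partial_swap i j T a) then v (partial_swap i j T a) * v b else 0)"
    using partial_swap_in_joint_basis[OF a] by (simp add: if_distrib[of "\<lambda>t. t * _"] sum.delta' cong: if_cong)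
  also have "\<dots> = (if b = partial_swap i j (sym_diff T T') a then v a * v b else 0)"
    using partial_swap_partial_swap[OF a] v by (auto simp: algebra_simps)
  finally show ?thesis .
qed

lemma is_projection_swap_test_proj: "is_projection joint_basis (swap_test_proj i j y z)"
proof -
  let ?v = "shift_sign i j y z"
  have "(\<Sum>e\<in>joint_basis. swap_test_proj i j y z a e * swap_test_proj i j y z e b) = swap_test_proj i j y z a b"
    if a: "a \<in> joint_basis" for a b
  proof -
    have "(\<Sum>e\<in>joint_basis. swap_test_proj i j y z a e * swap_test_proj i j y z e b) =
       (\<Sum>e\<in>joint_basis. \<Sum>T\<in>Pow {..<R}. \<Sum>T'\<in>Pow {..<R}.
          (if e = partial_swap i j T a then ?v a * ?v e else 0) *
          (if b = partial_swap i j T' e then ?v e * ?v b else 0)) / 2^R / 2^R"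
      unfolding swap_test_proj_def by (simp add: sum_product sum_divide_distrib)
    also have "\<dots> = (\<Sum>T\<in>Pow {..<R}. \<Sum>T'\<in>Pow {..<R}. \<Sum>e\<in>joint_basis.
          (if e = partial_swap i j T a then ?v a * ?v e else 0) *
          (if b = partial_swap i j T' e then ?v e * ?v b else 0)) / 2^R / 2^R"
      by (simp add: sum.swap[of _ joint_basis] sum.swap[of _ joint_basis "Pow {..<R}"])
    also have "\<dots> = (\<Sum>T\<in>Pow {..<R}. \<Sum>T'\<in>Pow {..<R}.
          (if b = partial_swap i j (sym_diff T T') a then ?v a * ?v b else 0)) / 2^R / 2^R"
      using sum_partial_swap_mult[OF a, where v="shift_sign i j y z"] by simp
    also have "\<dots> = (\<Sum>T\<in>Pow {..<R}. \<Sum>S\<in>Pow {..<R}. (if b = partial_swap i j S a then ?v a * ?v b else 0)) / 2^R / 2^R"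
      by (intro arg_cong[where f="\<lambda>x. x / 2^R / 2^R"] sum.cong refl sum_Pow_symdiff) auto
    also have "\<dots> = swap_test_proj i j y z a b"
      unfolding swap_test_proj_def by (simp add: card_Pow)
    finally show ?thesis .
  qed
  moreover have "\<forall>a\<in>joint_basis. \<forall>b\<in>joint_basis. swap_test_proj i j y z a b = swap_test_proj i j y z b a"
    unfolding swap_test_proj_def using partial_swap_eq_iff by (auto intro!: sum.cong simp: mult.commute)
  ultimately show ?thesis unfolding is_projection_def by blast
qed

end

lemma is_projection_node_proj: "i < k \<Longrightarrow> j < k \<Longrightarrow> is_projection joint_basis (node_proj i j y z)"
  unfolding node_proj_def
  using is_projection_swap_test_proj is_projection_id_op[OF finite_joint_basis] is_projection_zero by auto

lemma bij_betw_dec: "bij_betw dec {..<M} Tup"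
proof (rule bij_betw_byWitness[where f'=enc])
  show "\<forall>a\<in>{..<M}. enc (dec a) = a" using enc_dec by blast
  show "\<forall>a'\<in>Tup. dec (enc a') = a'" using dec_enc by blast
  show "dec ` {..<M} \<subseteq> Tup" using dec_in by blast
  show "enc ` Tup \<subseteq> {..<M}" using enc_in by blast
qed

lemma sum_dec: "(\<Sum>d<M. h (dec d)) = (\<Sum>t\<in>Tup. h t)"
  using sum.reindex_bij_betw[OF bij_betw_dec, of h] by simp

lemma sum_dec_prod_subset:
  fixes f :: "nat \<Rightarrow> real"
  assumes "T \<subseteq> {..<R}"
  shows "(\<Sum>d<M. \<Prod>r<R. if r \<in> T then f (dec d r) else 1) = (\<Sum>l<N. f l) ^ card T * real N ^ (R - card T)"
proof -
  have "(\<Sum>d<M. \<Prod>r<R. if r \<in> T then f (dec d r) else 1) = (\<Sum>t\<in>Tup. \<Prod>r<R. if r \<in> T then f (t r) else 1)"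
    by (rule sum_dec)
  also have "\<dots> = (\<Prod>r<R. \<Sum>l<N. if r \<in> T then f l else 1)"
    using prod_sum_PiE[of "{..<R}" "\<lambda>_. {..<N}" "\<lambda>r l. if r \<in> T then f l else 1"] by simp
  also have "\<dots> = (\<Prod>r<R. if r \<in> T then (\<Sum>l<N. f l) else real N)"
    by (rule prod.cong) auto
  also have "\<dots> = (\<Sum>l<N. f l) ^ card T * real N ^ (R - card T)"
  proof -
    have "{..<R} \<inter> {r. r \<in> T} = T" "{..<R} \<inter> - {r. r \<in> T} = {..<R} - T" using assms by auto
    moreover have "card ({..<R} - T) = R - card T" using assms by (simp add: card_Diff_subset finite_subset)
    ultimately show ?thesis by (simp add: prod.If_cases)
  qed
  finally show ?thesis .
qed

lemma sum_joint_basis_pair: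
  fixes g :: "nat \<Rightarrow> real"
  assumes "i < k" "j < k" "i \<noteq> j"
  shows "(\<Sum>a\<in>joint_basis. g (a i) * g (a j)) = (\<Sum>d<M. g d) ^ 2 * real M ^ (k - 2)"
proof -
  define H where "H l d = (if l = i \<or> l = j then g d else 1)" for l d
  have "(\<Prod>l<k. \<Sum>d<M. H l d) = (\<Sum>a\<in>joint_basis. \<Prod>l<k. H l (a l))"
    unfolding joint_basis_def by (rule prod_sum_PiE) auto
  also have "\<dots> = (\<Sum>a\<in>joint_basis. g (a i) * g (a j))"
  proof (rule sum.cong[OF refl])
    fix a
    have "(\<Prod>l<k. H l (a l)) = H i (a i) * H j (a j) * (\<Prod>l\<in>{..<k} - {i, j}. H l (a l))"
      using assms by (intro prod_remove_two) auto
    also have "(\<Prod>l\<in>{..<k} - {i, j}. H l (a l)) = 1" unfolding H_def by (rule prod.neutral) auto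
    finally show "(\<Prod>l<k. H l (a l)) = g (a i) * g (a j)" unfolding H_def by simp
  qed
  finally have e: "(\<Sum>a\<in>joint_basis. g (a i) * g (a j)) = (\<Prod>l<k. \<Sum>d<M. H l d)" ..
  have "(\<Prod>l<k. \<Sum>d<M. H l d) = (\<Sum>d<M. H i d) * (\<Sum>d<M. H j d) * (\<Prod>l\<in>{..<k} - {i, j}. \<Sum>d<M. H l d)"
    using assms by (intro prod_remove_two) auto
  also have "(\<Prod>l\<in>{..<k} - {i, j}. \<Sum>d<M. H l d) = (\<Prod>l\<in>{..<k} - {i, j}. real M)"
    unfolding H_def by (rule prod.cong) auto
  also have "\<dots> = real M ^ (k - 2)"
    using assms by (simp add: card_Diff_subset numeral_2_eq_2)
  finally show ?thesis unfolding e H_def by (simp add: power2_eq_square)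
qed

lemma L2_set_joint_fingerprint: "L2_set (joint_fingerprint x) joint_basis = 1"
proof -
  have "(joint_fingerprint x a)\<^sup>2 = (1 / real M) ^ k" for a
  proof -
    have "(joint_fingerprint x a)\<^sup>2 = (\<Prod>l<k. fingerprint (x l) (a l) * fingerprint (x l) (a l))"
      unfolding joint_fingerprint_def power2_eq_square by (simp add: prod.distrib)
    also have "\<dots> = (\<Prod>l<k. 1 / real M)"
      unfolding fingerprint_def by (rule prod.cong) (auto simp: field_simps)
    finally show ?thesis by simp
  qed
  then have "(L2_set (joint_fingerprint x) joint_basis)\<^sup>2 = (\<Sum>a\<in>joint_basis. (1 / real M) ^ k)"
    unfolding L2_set_sq by simp
  also have "\<dots> = 1"
    unfolding joint_basis_def by (simp add: card_PiE field_simps)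
  finally show ?thesis
    using L2_set_nonneg[of "joint_fingerprint x" joint_basis] by (simp add: power2_eq_1_iff)
qed

context
  fixes i j assumes ij: "i < k" "j < k" "i \<noteq> j"
begin

lemma joint_fingerprint_mult_partial_swap:
  fixes T :: "nat set"
  assumes a: "a \<in> joint_basis"
  defines "a' \<equiv> partial_swap i j T a"
  shows "joint_fingerprint x a * joint_fingerprint x a' =
    code_sign (x i) (a i) * code_sign (x i) (a' i) * (code_sign (x j) (a j) * code_sign (x j) (a' j)) / real M ^ k"
proof -
  have sM: "sqrt (real M) * sqrt (real M) = real M" by simp
  have "joint_fingerprint x a * joint_fingerprint x a' =
      (\<Prod>l<k. code_sign (x l) (a l) * code_sign (x l) (a' l) / real M)"
    unfolding joint_fingerprint_def fingerprint_def prod.distrib[symmetric]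
    by (rule prod.cong[OF refl]) (simp add: sM[symmetric])
  also have "\<dots> = (\<Prod>l<k. code_sign (x l) (a l) * code_sign (x l) (a' l)) / real M ^ k"
    by (simp add: prod_dividef)
  also have "(\<Prod>l<k. code_sign (x l) (a l) * code_sign (x l) (a' l)) =
     (code_sign (x i) (a i) * code_sign (x i) (a' i)) * (code_sign (x j) (a j) * code_sign (x j) (a' j)) *
     (\<Prod>l\<in>{..<k} - {i, j}. code_sign (x l) (a l) * code_sign (x l) (a' l))"
    using ij by (intro prod_remove_two) auto
  also have "(\<Prod>l\<in>{..<k} - {i, j}. code_sign (x l) (a l) * code_sign (x l) (a' l)) = 1"
    by (rule prod.neutral) (auto simp: a'_def partial_swap_other[OF ij])
  finally show ?thesis by simp
qed

text \<open>On a copy r swapped by T the signs of x_i, x_j, y, z at positions t r and t' r combine into two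
  shifted signs; on an unswapped copy they cancel.\<close>
lemma joint_fingerprint_partial_swap:
  fixes T :: "nat set"
  assumes a: "a \<in> joint_basis"
  defines "a' \<equiv> partial_swap i j T a"
  shows "joint_fingerprint x a * joint_fingerprint x a' * (shift_sign i j y z a * shift_sign i j y z a') =
    subset_sign x i j y z T (a i) * subset_sign x i j y z T (a j) / real M ^ k"
proof -
  define t where "t = dec (a i)"
  define t' where "t' = dec (a j)"
  have da': "dec (a' i) = swap_on T t t'" "dec (a' j) = swap_on T t' t"
    using dec_partial_swap[OF ij a] unfolding a'_def t_def t'_def by auto
  let ?f = "\<lambda>r. (pm_sign (dot_bits (c (t r)) (x i)) * pm_sign (dot_bits (c (swap_on T t t' r)) (x i))) *
               (pm_sign (dot_bits (c (t' r)) (x j)) * pm_sign (dot_bits (c (swap_on T t' t r)) (x j))) *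
               (pm_sign (dot_bits (c (t r)) y) * pm_sign (dot_bits (c (t' r)) z)) *
               (pm_sign (dot_bits (c (swap_on T t t' r)) y) * pm_sign (dot_bits (c (swap_on T t' t r)) z))"
  define S where "S = code_sign (x i) (a i) * code_sign (x i) (a' i) * (code_sign (x j) (a j) * code_sign (x j) (a' j))"
  define V where "V = shift_sign i j y z a * shift_sign i j y z a'"
  have "S * V = (\<Prod>r<R. ?f r)"
    unfolding S_def V_def shift_sign_def code_sign_def t_def[symmetric] t'_def[symmetric] da' by (simp add: prod.distrib)
  also have "\<dots> = subset_sign x i j y z T (a i) * subset_sign x i j y z T (a j)"
    unfolding subset_sign_def t_def[symmetric] t'_def[symmetric] prod.distrib[symmetric]
  proof (rule prod.cong[OF refl])
    fix r
    show "?f r = (if r \<in> T then shifted_sign x i j y z (t r) else 1) *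
                 (if r \<in> T then shifted_sign x i j y z (t' r) else 1)"
    proof (cases "r \<in> T")
      case True
      then show ?thesis unfolding shifted_sign_def swap_on_def
        by (simp only: if_True mult.assoc pm_sign_neq[symmetric] pm_sign_eq_iff) argo
    next
      case False
      then show ?thesis unfolding shifted_sign_def swap_on_def
        by (simp only: if_False mult.assoc pm_sign_neq[symmetric] pm_sign_eq_1_iff mult_1) argo
    qed
  qed
  finally have SV: "S * V = subset_sign x i j y z T (a i) * subset_sign x i j y z T (a j)" .
  have "joint_fingerprint x a * joint_fingerprint x a' * V = S / real M ^ k * V"
    unfolding S_def a'_def joint_fingerprint_mult_partial_swap[OF a] ..
  then show ?thesis unfolding V_def[symmetric] SV[symmetric] by simp
qed

lemma sum_swap_test_proj_row:
  assumes a: "a \<in> joint_basis"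
  shows "(\<Sum>b\<in>joint_basis. joint_fingerprint x a * joint_fingerprint x b * swap_test_proj i j y z a b) =
    (\<Sum>T\<in>Pow {..<R}. joint_fingerprint x a * joint_fingerprint x (partial_swap i j T a)
                      * (shift_sign i j y z a * shift_sign i j y z (partial_swap i j T a))) / 2 ^ R"
proof -
  let ?\<psi> = "joint_fingerprint x" and ?v = "shift_sign i j y z"
  let ?t = "\<lambda>T b. if b = partial_swap i j T a then ?\<psi> a * ?\<psi> b * (?v a * ?v b) else 0"
  have entry: "?\<psi> a * ?\<psi> b * swap_test_proj i j y z a b = (\<Sum>T\<in>Pow {..<R}. ?t T b) / 2 ^ R" for b
  proof -
    have "?\<psi> a * ?\<psi> b * (\<Sum>T\<in>Pow {..<R}. if b = partial_swap i j T a then ?v a * ?v b else 0)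
        = (\<Sum>T\<in>Pow {..<R}. ?t T b)"
      unfolding sum_distrib_left by (rule sum.cong) auto
    then show ?thesis unfolding swap_test_proj_def by simp
  qed
  have "(\<Sum>b\<in>joint_basis. ?\<psi> a * ?\<psi> b * swap_test_proj i j y z a b)
      = (\<Sum>T\<in>Pow {..<R}. \<Sum>b\<in>joint_basis. ?t T b) / 2 ^ R"
    unfolding entry sum_divide_distrib[symmetric] by (subst sum.swap) (rule refl)
  also have "\<dots> = (\<Sum>T\<in>Pow {..<R}. ?\<psi> a * ?\<psi> (partial_swap i j T a) * (?v a * ?v (partial_swap i j T a))) / 2 ^ R"
    using partial_swap_in_joint_basis[OF ij a] by (simp add: sum.delta')
  finally show ?thesis .
qed

lemma sum_subset_sign_pair:
  assumes "T \<subseteq> {..<R}"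
  shows "(\<Sum>a\<in>joint_basis. subset_sign x i j y z T (a i) * subset_sign x i j y z T (a j)) / real M ^ k
    = (((\<Sum>l<N. shifted_sign x i j y z l) / real N)\<^sup>2) ^ card T"
proof -
  define S where "S = (\<Sum>l<N. shifted_sign x i j y z l)"
  have ct: "card T \<le> R" using card_mono[OF _ assms] by simp
  have "k \<ge> 2" using ij by auto
  then have Mk: "real M ^ k = real M ^ (k - 2) * real M ^ 2"
    by (metis le_add_diff_inverse2 power_add)
  have "(\<Sum>d<M. subset_sign x i j y z T d) = S ^ card T * real N ^ (R - card T)"
    unfolding subset_sign_def S_def by (rule sum_dec_prod_subset[OF assms])
  also have "\<dots> = (S / real N) ^ card T * real M"
    using ct unfolding power_mult of_nat_power by (simp add: power_divide field_simps power_add[symmetric])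
  finally have "(\<Sum>a\<in>joint_basis. subset_sign x i j y z T (a i) * subset_sign x i j y z T (a j))
      = ((S / real N) ^ card T * real M) ^ 2 * real M ^ (k - 2)"
    using sum_joint_basis_pair[OF ij] by simp
  then show ?thesis
    unfolding Mk S_def[symmetric] by (simp add: power_mult_distrib power_mult[symmetric] mult.commute)
qed

lemma quad_form_swap_test_proj:
  "quad_form joint_basis (swap_test_proj i j y z) (joint_fingerprint x)
     = ((1 + ((\<Sum>l<N. shifted_sign x i j y z l) / real N)\<^sup>2) / 2) ^ R"
proof -
  define \<beta> where "\<beta> = (\<Sum>l<N. shifted_sign x i j y z l) / real N"
  have "quad_form joint_basis (swap_test_proj i j y z) (joint_fingerprint x) =
      (\<Sum>a\<in>joint_basis. \<Sum>b\<in>joint_basis. joint_fingerprint x a * joint_fingerprint x b * swap_test_proj i j y z a b)"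
    unfolding quad_form_def by (intro sum.cong refl) (simp only: mult_ac)
  also have "\<dots> = (\<Sum>a\<in>joint_basis. (\<Sum>T\<in>Pow {..<R}.
      subset_sign x i j y z T (a i) * subset_sign x i j y z T (a j) / real M ^ k) / 2 ^ R)"
    by (intro sum.cong refl) (simp add: sum_swap_test_proj_row joint_fingerprint_partial_swap)
  also have "\<dots> = (\<Sum>a\<in>joint_basis. \<Sum>T\<in>Pow {..<R}.
      subset_sign x i j y z T (a i) * subset_sign x i j y z T (a j) / real M ^ k) / 2 ^ R"
    by (simp only: sum_divide_distrib)
  also have "\<dots> = (\<Sum>T\<in>Pow {..<R}.
      (\<Sum>a\<in>joint_basis. subset_sign x i j y z T (a i) * subset_sign x i j y z T (a j)) / real M ^ k) / 2 ^ R"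
    by (subst sum.swap) (simp add: sum_divide_distrib)
  also have "\<dots> = (\<Sum>T\<in>Pow {..<R}. (\<beta>\<^sup>2) ^ card T) / 2 ^ R"
    unfolding \<beta>_def by (intro arg_cong[where f="\<lambda>t. t / 2 ^ R"] sum.cong refl sum_subset_sign_pair) auto
  also have "(\<Sum>T\<in>Pow {..<R}. (\<beta>\<^sup>2) ^ card T) = (1 + \<beta>\<^sup>2) ^ R"
    using prod_add[of "{..<R}" "\<lambda>_. \<beta>\<^sup>2" "\<lambda>_. 1"] by (simp add: add.commute)
  finally show ?thesis unfolding \<beta>_def by (simp add: power_divide)
qed

end

lemma shifted_sign_xor_bits:
  assumes "x i \<in> bitstrings n" "x j \<in> bitstrings n" "y \<in> bitstrings n" "z \<in> bitstrings n"
  shows "shifted_sign x i j y z l =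
    pm_sign (dot_bits (c l) (xor_bits (x i) y) \<noteq> dot_bits (c l) (xor_bits (x j) z))"
  unfolding shifted_sign_def using assms by (simp add: dot_bits_xor_bits length_bitstrings)

lemma sum_shifted_sign_sq_le:
  assumes "x i \<in> bitstrings n" "x j \<in> bitstrings n" "y \<in> bitstrings n" "z \<in> bitstrings n"
    and "xor_bits (x i) y \<noteq> xor_bits (x j) z"
  shows "((\<Sum>l<N. shifted_sign x i j y z l) / real N)\<^sup>2 \<le> 1 / 4"
proof -
  let ?d = "disagreements N c (xor_bits (x i) y) (xor_bits (x j) z)"
  have "xor_bits (x i) y \<in> bitstrings n" "xor_bits (x j) z \<in> bitstrings n"
    using assms unfolding bitstrings_def by auto
  then have "N \<le> 4 * ?d \<and> 4 * ?d \<le> 3 * N"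
    using code assms(5) unfolding balanced_code_def by blast
  moreover have "(\<Sum>l<N. shifted_sign x i j y z l) = real N - 2 * real ?d"
    unfolding disagreements_def using assms by (simp add: shifted_sign_xor_bits sum_pm_sign)
  ultimately have "\<bar>\<Sum>l<N. shifted_sign x i j y z l\<bar> \<le> real N / 2"
    by linarith
  then have "\<bar>(\<Sum>l<N. shifted_sign x i j y z l) / real N\<bar> \<le> 1 / 2"
    by (simp add: divide_le_eq)
  then have "\<bar>(\<Sum>l<N. shifted_sign x i j y z l) / real N\<bar>\<^sup>2 \<le> (1 / 2)\<^sup>2"
    by (intro power_mono) auto
  then show ?thesis by (simp add: power2_eq_square)
qed

lemma branch_proj_error_same_register:
  assumes "x i \<in> bitstrings n" "y \<in> bitstrings n" "z \<in> bitstrings n"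
  shows "L2_set (\<lambda>a. op_apply joint_basis (branch_proj node_proj x i i y z) (joint_fingerprint x) a
                      - joint_fingerprint x a) joint_basis = 0"
proof (rule L2_set_0', intro ballI)
  fix a assume a: "a \<in> joint_basis"
  have "xor_bits (x i) y = xor_bits (x i) z \<longleftrightarrow> y = z"
    using xor_bits_left_cancel assms by (simp add: length_bitstrings)
  then show "op_apply joint_basis (branch_proj node_proj x i i y z) (joint_fingerprint x) a
               - joint_fingerprint x a = 0"
    using a by (auto simp: branch_proj_def node_proj_def op_apply_id_op op_apply_proj_compl)
      (simp_all add: op_apply_def)
qed

text \<open>The swap test accepts the shifted fingerprints with probability ((1 + \<beta>^2)/2)^R, where \<beta> is their
  overlap: \<beta> = 1 if the shifted inputs agree and \<beta>^2 \<le> 1/4 otherwise, by balancedness of the code.\<close>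
lemma branch_proj_error_swap_test:
  assumes x: "\<forall>l<k. x l \<in> bitstrings n" and ij: "i < k" "j < k" "i \<noteq> j"
    and yz: "y \<in> bitstrings n" "z \<in> bitstrings n"
  shows "(L2_set (\<lambda>a. op_apply joint_basis (branch_proj node_proj x i j y z) (joint_fingerprint x) a
                       - joint_fingerprint x a) joint_basis)\<^sup>2 \<le> (5/8) ^ R"
proof -
  let ?Q = "swap_test_proj i j y z" and ?\<psi> = "joint_fingerprint x"
  define \<beta> where "\<beta> = (\<Sum>l<N. shifted_sign x i j y z l) / real N"
  have Q: "is_projection joint_basis ?Q" by (rule is_projection_swap_test_proj[OF ij])
  have norm: "(L2_set ?\<psi> joint_basis)\<^sup>2 = 1" by (simp add: L2_set_joint_fingerprint)
  have accept: "quad_form joint_basis ?Q ?\<psi> = ((1 + \<beta>\<^sup>2) / 2) ^ R"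
    unfolding \<beta>_def by (rule quad_form_swap_test_proj[OF ij])
  show ?thesis
  proof (cases "xor_bits (x i) y = xor_bits (x j) z")
    case True
    then have "\<beta> = 1" unfolding \<beta>_def using x ij yz by (simp add: shifted_sign_xor_bits pm_sign_def)
    then show ?thesis
      using True ij L2_set_op_apply_proj_diff_sq[OF finite_joint_basis Q] norm accept
      by (simp add: branch_proj_def node_proj_def)
  next
    case False
    then have "\<beta>\<^sup>2 \<le> 1 / 4" unfolding \<beta>_def using x ij yz by (intro sum_shifted_sign_sq_le) auto
    then have "quad_form joint_basis ?Q ?\<psi> \<le> (5/8) ^ R" unfolding accept by (intro power_mono) auto
    then show ?thesis
      using False ij norm quad_form_proj_compl[OF finite_joint_basis]
        L2_set_op_apply_proj_diff_sq[OF finite_joint_basis is_projection_proj_compl[OF finite_joint_basis Q]]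
      by (simp add: branch_proj_def node_proj_def)
  qed
qed

lemma branch_proj_error:
  assumes "\<forall>l<k. x l \<in> bitstrings n" "i < k" "j < k" "y \<in> bitstrings n" "z \<in> bitstrings n"
  shows "L2_set (\<lambda>a. op_apply joint_basis (branch_proj node_proj x i j y z) (joint_fingerprint x) a
                      - joint_fingerprint x a) joint_basis \<le> sqrt ((5/8) ^ R)"
proof (cases "i = j")
  case True
  then show ?thesis using branch_proj_error_same_register assms by simp
next
  case False
  then show ?thesis using branch_proj_error_swap_test[OF assms(1-3) False assms(4-5)] real_le_rsqrt by blast
qed

definition fingerprint_protocol :: "'s meq_tree \<Rightarrow> 's smp_protocol" where
  "fingerprint_protocol T =
     \<lparr>qubits = (\<lambda>l. m * R),
      msg = (\<lambda>l w a b. complex_of_real (fingerprint w a * fingerprint w b)),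
      referee = (\<lambda>s a b. complex_of_real (tree_povm joint_basis node_proj T id_op s a b))\<rparr>"

lemma joint_space_fingerprint_protocol: "joint_space k (fingerprint_protocol T) = joint_basis"
  unfolding joint_space_def fingerprint_protocol_def joint_basis_def by simp

lemma smp_cost_fingerprint_protocol: "smp_cost k (fingerprint_protocol T) = k * (m * R)"
  unfolding smp_cost_def fingerprint_protocol_def by simp

lemma density_on_fingerprint: "density_on {..<M} (\<lambda>a b. complex_of_real (fingerprint w a * fingerprint w b))"
  unfolding density_on_def
proof
  show "psd_on {..<M} (\<lambda>a b. complex_of_real (fingerprint w a * fingerprint w b))"
  proof (rule psd_on_of_real)
    fix u
    have "quad_form {..<M} (\<lambda>a b. fingerprint w a * fingerprint w b) u = (\<Sum>a<M. u a * fingerprint w a)\<^sup>2"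
      unfolding quad_form_def by (simp add: sum_product power2_eq_square algebra_simps)
    then show "0 \<le> quad_form {..<M} (\<lambda>a b. fingerprint w a * fingerprint w b) u" by simp
  qed auto
  have "fingerprint w a * fingerprint w a = 1 / real M" for a
    unfolding fingerprint_def by simp
  then show "(\<Sum>a<M. complex_of_real (fingerprint w a * fingerprint w a)) = 1"
    by simp
qed

lemma povm_on_tree_povm:
  assumes "meq_wf k n T"
  shows "povm_on joint_basis (\<lambda>s a b. complex_of_real (tree_povm joint_basis node_proj T id_op s a b))"
  unfolding povm_on_def
proof (intro conjI allI exI[of _ "leaves T"])
  show "psd_on joint_basis (\<lambda>a b. complex_of_real (tree_povm joint_basis node_proj T id_op s a b))" for s
    using tree_povm_sym quad_form_tree_povm_nonneg by (auto intro!: psd_on_of_real)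
  show "finite (leaves T)" by (rule finite_leaves)
  show "s \<notin> leaves T \<longrightarrow> (\<forall>a\<in>joint_basis. \<forall>b\<in>joint_basis.
          complex_of_real (tree_povm joint_basis node_proj T id_op s a b) = 0)" for s
    by (simp add: tree_povm_outside_leaves)
  have proj: "\<forall>(i,j,y,z)\<in>nodes T. is_projection joint_basis (node_proj i j y z)"
    using meq_wf_nodes[OF assms] is_projection_node_proj by auto
  have "(\<Sum>s\<in>leaves T. tree_povm joint_basis node_proj T id_op s a b) = id_op a b"
    if "a \<in> joint_basis" "b \<in> joint_basis" for a b
    using sum_tree_povm[OF finite_joint_basis proj finite_leaves subset_refl] gram_id_op[OF finite_joint_basis] that
    by simp
  then show "\<forall>a\<in>joint_basis. \<forall>b\<in>joint_basis.
      (\<Sum>s\<in>leaves T. complex_of_real (tree_povm joint_basis node_proj T id_op s a b)) = (if a = b then 1 else 0)"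
    by (simp add: id_op_def flip: of_real_sum)
qed

lemma valid_fingerprint_protocol: "meq_wf k n T \<Longrightarrow> valid_smp k n (fingerprint_protocol T)"
  unfolding valid_smp_def joint_space_fingerprint_protocol
  using density_on_fingerprint povm_on_tree_povm by (simp add: fingerprint_protocol_def)

lemma output_prob_fingerprint_protocol:
  "output_prob k (fingerprint_protocol T) x s
     = quad_form joint_basis (tree_povm joint_basis node_proj T id_op s) (joint_fingerprint x)"
proof -
  have "joint_state k (fingerprint_protocol T) x b a = complex_of_real (joint_fingerprint x b * joint_fingerprint x a)"
    for a b
    unfolding joint_state_def fingerprint_protocol_def joint_fingerprint_def by (simp add: prod.distrib)
  then show ?thesis
    unfolding output_prob_def joint_space_fingerprint_protocol quad_form_def
    by (simp add: fingerprint_protocol_def algebra_simps flip: of_real_mult)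
qed

lemma output_prob_fingerprint_protocol_ge:
  assumes wf: "meq_wf k n T" and x: "x \<in> smp_inputs k n"
  shows "1 - 2 * real (meq_depth T) * sqrt ((5/8) ^ R)
           \<le> output_prob k (fingerprint_protocol T) x (meq_eval T x)"
proof -
  have xb: "\<forall>l<k. x l \<in> bitstrings n" using x unfolding smp_inputs_def by auto
  have "\<forall>(i,j,y,z)\<in>nodes T. is_projection joint_basis (node_proj i j y z) \<and>
      L2_set (\<lambda>a. op_apply joint_basis (branch_proj node_proj x i j y z) (joint_fingerprint x) a
                   - joint_fingerprint x a) joint_basis \<le> sqrt ((5/8) ^ R)"
    using meq_wf_nodes[OF wf] is_projection_node_proj branch_proj_error[OF xb]
    unfolding bitstrings_def by fastforce
  then show ?thesis
    unfolding output_prob_fingerprint_protocol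
    by (intro quad_form_tree_povm_meq_eval_ge) (auto simp: L2_set_joint_fingerprint)
qed


end

section \<open>The protocols\<close>

lemma fingerprint_scheme_exists:
  assumes n: "n \<ge> 1" and m: "m \<ge> 2" and K: "8 * n \<le> 2 ^ (m - 2)"
  shows "\<exists>c dec enc. fingerprint_scheme n m R c dec enc"
proof -
  have "m = (m - 2) + 2" using m by simp
  then have "(2::nat) ^ m = 2 ^ (m - 2) * 2 ^ 2" by (metis power_add)
  then have N: "(2::nat) ^ m = 4 * 2 ^ (m - 2)" by simp
  obtain c where c: "balanced_code n (2 ^ m) c"
    using balanced_code_exists[OF n K] unfolding N by blast
  have "card (PiE {..<R} (\<lambda>_. {..<(2::nat) ^ m})) = card {..<(2::nat) ^ (m * R)}"
    by (simp add: card_PiE power_mult)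
  then obtain dec where dec: "bij_betw dec {..<(2::nat) ^ (m * R)} (PiE {..<R} (\<lambda>_. {..<(2::nat) ^ m}))"
    by (metis finite_lessThan finite_PiE finite_same_card_bij)
  have "fingerprint_scheme n m R c dec (inv_into {..<2 ^ (m * R)} dec)"
  proof
    show "balanced_code n (2 ^ m) c" by (rule c)
    show "\<And>d. d < 2 ^ (m * R) \<Longrightarrow> dec d \<in> PiE {..<R} (\<lambda>_. {..<2 ^ m})"
      using dec by (auto simp: bij_betw_def)
    show "\<And>t. t \<in> PiE {..<R} (\<lambda>_. {..<2 ^ m}) \<Longrightarrow> inv_into {..<2 ^ (m * R)} dec t < 2 ^ (m * R)"
      using dec by (metis bij_betw_def inv_into_into lessThan_iff)
    show "\<And>d. d < 2 ^ (m * R) \<Longrightarrow> inv_into {..<2 ^ (m * R)} dec (dec d) = d"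
      using dec by (simp add: bij_betw_inv_into_left)
    show "\<And>t. t \<in> PiE {..<R} (\<lambda>_. {..<2 ^ m}) \<Longrightarrow> dec (inv_into {..<2 ^ (m * R)} dec t) = t"
      using dec by (simp add: bij_betw_inv_into_right)
  qed
  then show ?thesis by blast
qed

lemma fingerprint_protocol_exists:
  assumes "n \<ge> 1" "m \<ge> 2" "8 * n \<le> 2 ^ (m - 2)" "meq_wf k n T" "computes_tree k n T f"
  shows "\<exists>P :: 's smp_protocol. valid_smp k n P \<and> smp_cost k P = k * (m * R) \<and>
     (\<forall>x\<in>smp_inputs k n. 1 - 2 * real (meq_depth T) * sqrt ((5/8) ^ R) \<le> output_prob k P x (f x))"
proof -
  obtain c dec enc where "fingerprint_scheme n m R c dec enc"
    using fingerprint_scheme_exists[OF assms(1-3)] by blast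
  then interpret fingerprint_scheme n k m R c dec enc .
  show ?thesis
  proof (intro exI[of _ "fingerprint_protocol T"] conjI ballI)
    fix x assume "x \<in> smp_inputs k n"
    then show "1 - 2 * real (meq_depth T) * sqrt ((5/8) ^ R) \<le> output_prob k (fingerprint_protocol T) x (f x)"
      using output_prob_fingerprint_protocol_ge[OF assms(4)] assms(5) unfolding computes_tree_def by simp
  qed (simp_all add: valid_fingerprint_protocol[OF assms(4)] smp_cost_fingerprint_protocol)
qed

definition guessing_protocol :: "'s meq_tree \<Rightarrow> 's smp_protocol" where
  "guessing_protocol T =
     \<lparr>qubits = (\<lambda>l. 0), msg = (\<lambda>l w a b. 1),
      referee = (\<lambda>s a b. complex_of_real (if s \<in> leaves T then id_op a b / real (card (leaves T)) else 0))\<rparr>"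

lemma valid_guessing_protocol: "valid_smp k n (guessing_protocol T)"
  unfolding valid_smp_def
proof (intro conjI allI impI ballI)
  fix l w
  have "psd_on {..<1::nat} (\<lambda>a b. complex_of_real 1)"
    by (rule psd_on_of_real) (simp_all add: quad_form_def)
  then show "density_on {..<2 ^ qubits (guessing_protocol T) l} (msg (guessing_protocol T) l w)"
    unfolding density_on_def guessing_protocol_def by simp
next
  let ?A = "joint_space k (guessing_protocol T)"
  have fin: "finite ?A" unfolding joint_space_def by (simp add: finite_PiE)
  have L: "0 < real (card (leaves T))"
    using leaves_nonempty[of T] finite_leaves[of T] by (simp add: card_gt_0_iff)
  have "psd_on ?A (\<lambda>a b. complex_of_real (if s \<in> leaves T then id_op a b / real (card (leaves T)) else 0))"
    for s
  proof (rule psd_on_of_real)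
    fix u
    have "quad_form ?A (\<lambda>a b. if s \<in> leaves T then id_op a b / real (card (leaves T)) else 0) u
        = (if s \<in> leaves T then quad_form ?A id_op u / real (card (leaves T)) else 0)"
      unfolding quad_form_def by (simp add: sum_divide_distrib)
    then show "0 \<le> quad_form ?A (\<lambda>a b. if s \<in> leaves T then id_op a b / real (card (leaves T)) else 0) u"
      using quad_form_id_op[OF fin, of u] L by simp
  qed (auto simp: id_op_def)
  then show "povm_on ?A (referee (guessing_protocol T))"
    unfolding povm_on_def guessing_protocol_def using finite_leaves[of T] L
    by (intro conjI allI exI[of _ "leaves T"]) (auto simp: id_op_def simp flip: of_real_sum)
qed

lemma smp_cost_guessing_protocol: "smp_cost k (guessing_protocol T) = 0"
  unfolding smp_cost_def guessing_protocol_def by simp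

lemma output_prob_guessing_protocol:
  assumes "s \<in> leaves T"
  shows "output_prob k (guessing_protocol T) x s = 1 / real (card (leaves T))"
proof -
  have "joint_space k (guessing_protocol T) = {\<lambda>l\<in>{..<k}. 0}"
    unfolding joint_space_def guessing_protocol_def by (auto simp: PiE_def extensional_def fun_eq_iff)
  then show ?thesis
    using assms unfolding output_prob_def joint_state_def guessing_protocol_def by (simp add: id_op_def)
qed

lemma ln_two_ge_half: "ln (2::real) \<ge> 1/2"
  using ln_le_minus_one[of "1/2::real"] by (simp add: ln_div)

lemma five_eighths_pow_le:
  fixes D :: nat and \<delta> :: real
  assumes "D \<ge> 1" "0 < \<delta>" "L = ln (real D) + ln (1 / \<delta>)" "L \<ge> ln 2" "real R \<ge> 6 * L"
  shows "2 * real D * (5/8) ^ R \<le> \<delta>"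
proof -
  have L: "L > 0" using assms(4) ln_two_ge_half by linarith
  have l58: "ln (5/8::real) \<le> - 3/8" using ln_le_minus_one[of "5/8::real"] by simp
  have "(5/8::real) ^ R = exp (real R * ln (5/8))"
    by (simp add: exp_of_nat_mult)
  also have "\<dots> \<le> exp (6 * L * ln (5/8))"
    using assms(5) by (intro exp_mono mult_right_mono_neg) auto
  also have "\<dots> \<le> exp (6 * L * (-3/8))"
    using l58 L by (intro exp_mono mult_left_mono) auto
  also have "\<dots> = exp (- L) * exp (- (5/4 * L))" by (simp add: exp_add[symmetric])
  also have "exp (- (5/4 * L)) \<le> exp (- ln 2)"
    using assms(4) L by simp
  also have "exp (- ln 2) = (1/2::real)" by (simp add: exp_minus)
  also have "exp (- L) = \<delta> / real D"
    using assms(1-3) by (simp add: exp_diff exp_minus ln_div)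
  finally show ?thesis using assms(1) by (simp add: field_simps)
qed

lemma fingerprint_cost_le:
  fixes n :: nat and L :: real
  assumes "n \<ge> 2" "L \<ge> ln 2"
  shows "real ((nat \<lceil>log 2 (real n)\<rceil> + 5) * (2 * nat \<lceil>6 * L\<rceil>)) \<le> 224 * L * ln (real n)"
proof -
  have lg: "log 2 (real n) \<ge> 1" and ln: "ln (real n) > 0" using assms(1) by simp_all
  have "real (nat \<lceil>log 2 (real n)\<rceil>) \<le> log 2 (real n) + 1"
    using lg by linarith
  then have "real (nat \<lceil>log 2 (real n)\<rceil>) + 5 \<le> 7 * log 2 (real n)"
    using lg by linarith
  also have "\<dots> = 7 * (ln (real n) / ln 2)"
    by (simp add: log_def)
  also have "\<dots> \<le> 14 * ln (real n)"
    using ln_two_ge_half ln by (simp add: divide_le_eq)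
  finally have p: "real (nat \<lceil>log 2 (real n)\<rceil>) + 5 \<le> 14 * ln (real n)" .
  have r: "2 * real (nat \<lceil>6 * L\<rceil>) \<le> 16 * L"
    using assms(2) ln_two_ge_half by linarith
  have "(real (nat \<lceil>log 2 (real n)\<rceil>) + 5) * (2 * real (nat \<lceil>6 * L\<rceil>)) \<le> (14 * ln (real n)) * (16 * L)"
    by (rule mult_mono[OF p r]) (use ln in auto)
  then show ?thesis by simp
qed

lemma meq_tree_guessing_protocol:
  assumes "meq_depth T = 1" "1/2 \<le> \<delta>" "computes_tree k n T f"
  shows "\<exists>P :: 's smp_protocol. valid_smp k n P \<and> smp_cost k P = 0 \<and>
           (\<forall>x\<in>smp_inputs k n. 1 - \<delta> \<le> output_prob k P x (f x))"
proof (intro exI[of _ "guessing_protocol T"] conjI ballI valid_guessing_protocol smp_cost_guessing_protocol)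
  fix x assume "x \<in> smp_inputs k n"
  then have "f x \<in> leaves T"
    using assms(3) meq_eval_in_leaves unfolding computes_tree_def by metis
  moreover have "0 < card (leaves T)" "card (leaves T) \<le> 2"
    using leaves_nonempty finite_leaves card_leaves_depth_one[OF assms(1)] by (auto simp: card_gt_0_iff)
  then have "1 / 2 \<le> 1 / real (card (leaves T))"
    by (intro divide_left_mono) auto
  ultimately show "1 - \<delta> \<le> output_prob k (guessing_protocol T) x (f x)"
    using assms(2) by (simp add: output_prob_guessing_protocol)
qed

text \<open>Fingerprints of m = \<lceil>log n\<rceil> + 5 qubits leave room for a balanced code of 2^m words, and 2R'
  copies with R' = \<lceil>6 L\<rceil> make every node's error at most (5/8)^R'.\<close>
lemma meq_tree_fingerprint_protocol:
  assumes "2 \<le> n" "1 \<le> D" "0 < \<delta>" "meq_wf k n T" "meq_depth T = D" "computes_tree k n T f"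
    and L: "L = ln (real D) + ln (1 / \<delta>)" "ln 2 \<le> L"
  shows "\<exists>P :: 's smp_protocol. valid_smp k n P \<and> real (smp_cost k P) \<le> 224 * real k * L * ln (real n) \<and>
           (\<forall>x\<in>smp_inputs k n. 1 - \<delta> \<le> output_prob k P x (f x))"
proof -
  define m where "m = nat \<lceil>log 2 (real n)\<rceil> + 5"
  define R' where "R' = nat \<lceil>6 * L\<rceil>"
  have "real n = 2 powr (log 2 (real n))"
    using assms(1) by simp
  also have "\<dots> \<le> 2 powr real (nat \<lceil>log 2 (real n)\<rceil>)"
    by (intro powr_mono) linarith+
  also have "\<dots> = real (2 ^ nat \<lceil>log 2 (real n)\<rceil>)"
    by (simp add: powr_realpow)
  finally have "n \<le> 2 ^ nat \<lceil>log 2 (real n)\<rceil>"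
    by linarith
  then have "8 * n \<le> 2 ^ (m - 2)" unfolding m_def by (simp add: power_add)
  moreover have "1 \<le> n" "2 \<le> m" using assms(1) unfolding m_def by auto
  ultimately obtain P :: "'s smp_protocol" where P: "valid_smp k n P" "smp_cost k P = k * (m * (2 * R'))"
    "\<forall>x\<in>smp_inputs k n. 1 - 2 * real D * sqrt ((5/8) ^ (2 * R')) \<le> output_prob k P x (f x)"
    using fingerprint_protocol_exists[of n m k T f "2 * R'"] assms(4-6) by auto
  have "(5/8::real) ^ (2 * R') = ((5/8) ^ R')\<^sup>2"
    by (simp add: power_mult[symmetric] mult.commute)
  then have "sqrt ((5/8::real) ^ (2 * R')) = (5/8) ^ R'"
    by simp
  moreover have "2 * real D * (5/8) ^ R' \<le> \<delta>"
    unfolding R'_def by (rule five_eighths_pow_le[OF assms(2,3) L]) linarith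
  moreover have "real k * real (m * (2 * R')) \<le> real k * (224 * L * ln (real n))"
    using fingerprint_cost_le[OF assms(1) L(2)] unfolding m_def R'_def by (intro mult_left_mono) auto
  ultimately show ?thesis
    using P by (intro exI[of _ P]) (auto simp: algebra_simps)
qed

lemma ln_two_le_depth_error:
  fixes D :: nat and \<delta> :: real
  assumes "1 \<le> D" "0 < \<delta>" "\<delta> < 1" "\<not> (D = 1 \<and> 1/2 \<le> \<delta>)"
  shows "ln 2 \<le> ln (real D) + ln (1 / \<delta>)"
proof (cases "D = 1")
  case True
  then have "2 < 1 / \<delta>" using assms by (simp add: field_simps)
  then show ?thesis using True assms(2) by (simp add: less_imp_le)
next
  case False
  then have "ln 2 \<le> ln (real D)" using assms(1) by simp
  moreover have "0 < ln (1 / \<delta>)" using assms(2,3) by simp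
  ultimately show ?thesis by simp
qed

theorem theorem2:
  shows "\<exists>C::real. \<forall>(n::nat) (k::nat) (D::nat) (\<delta>::real) (T::'s meq_tree) (f::(nat \<Rightarrow> bits) \<Rightarrow> 's).
    2 \<le> n \<longrightarrow> 1 \<le> k \<longrightarrow> 1 \<le> D \<longrightarrow> 0 < \<delta> \<longrightarrow> \<delta> < 1 \<longrightarrow>
    meq_wf k n T \<longrightarrow> meq_depth T = D \<longrightarrow> computes_tree k n T f \<longrightarrow>
    (\<exists>P :: 's smp_protocol.
       valid_smp k n P \<and>
       real (smp_cost k P) \<le> C * real k * (ln (real D) + ln (1 / \<delta>)) * ln (real n) \<and>
       (\<forall>x\<in>smp_inputs k n. 1 - \<delta> \<le> output_prob k P x (f x)))"
proof (intro exI[of _ 224] allI impI)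
  fix n k D :: nat and \<delta> :: real and T :: "'s meq_tree" and f :: "(nat \<Rightarrow> bits) \<Rightarrow> 's"
  assume n: "2 \<le> n" and "1 \<le> k" and D: "1 \<le> D" and \<delta>: "0 < \<delta>" "\<delta> < 1"
    and T: "meq_wf k n T" "meq_depth T = D" "computes_tree k n T f"
  have "0 < ln (1 / \<delta>)" "0 < ln (real n)" using n \<delta> by simp_all
  show "\<exists>P :: 's smp_protocol. valid_smp k n P \<and>
      real (smp_cost k P) \<le> 224 * real k * (ln (real D) + ln (1 / \<delta>)) * ln (real n) \<and>
      (\<forall>x\<in>smp_inputs k n. 1 - \<delta> \<le> output_prob k P x (f x))"
  proof (cases "D = 1 \<and> 1/2 \<le> \<delta>")
    case True
    then show ?thesis
      using meq_tree_guessing_protocol[of T \<delta> k n f] T \<open>0 < ln (1 / \<delta>)\<close> \<open>0 < ln (real n)\<close> by auto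
  next
    case False
    then show ?thesis
      using meq_tree_fingerprint_protocol[OF n D \<delta>(1) T refl ln_two_le_depth_error[OF D \<delta> False]] by simp
  qed
qed

end
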